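(* Let $1\le p<\infty$, $N\ge2$, and for $1\le i\le N$ let $T_i=T_{f_i,\omega^{(i)}}$ be unilateral pseudo-shifts on $\ell^p(\mathbb{N})$ with maps $f_i$ and weights $\omega^{(i)}=(w^{(i)}_{f_i(m)})_m$; let $W^{(i)}_{m,n}=\prod_{\nu=1}^nw^{(i)}_{f_i^\nu(m)}$. The following are equivalent: (i) $T_1,\dots,T_N$ are d-weakly mixing. (ii) $T_1,\dots,T_N$ satisfy the Disjoint Hypercyclicity Criterion. (iii) For each $R\in\mathbb{N}$, the direct sums $\oplus_{r=1}^RT_1,\dots,\oplus_{r=1}^RT_N$ satisfy the Disjoint Blow-up/Collapse Criterion. (iv) There is a strictly increasing sequence $(n_k)$ of positive integers such that (a) $|W^{(i)}_{m,n_k}|\to\infty$ as $k\to\infty$ for all $m\in\mathbb{N}$, $1\le i\le N$; and (b) for each $\epsilon>0$ and $K,M\in\mathbb{N}$ there is $k\ge K$ such that for all $1\le i,\ell\le N$ with $i\ne\ell$: $f_\ell^{n_k}([M])\cap f_i^{n_k}([M])=\emptyset$ and $\left|\frac{W^{(i)}_{f_i^{-n_k}(j),n_k}}{W^{(\ell)}_{f_\ell^{-n_k}(j),n_k}}\right|<\epsilon$ whenever $j\in f_\ell^{n_k}([M])\cap f_i^{n_k}(\mathbb{N}\setminus[M])$.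
   Context: $\mathbb{N}=\{1,2,\dots\}$; $\{e_m\}$ is the canonical basis of $\ell^p(\mathbb{N})$ over $\mathbb{K}\in\{\mathbb{R},\mathbb{C}\}$. For a strictly increasing $f:\mathbb{N}\to\mathbb{N}$ with $f(1)>1$ and a bounded, nonzero sequence of scalars $\omega=(w_{f(m)})_{m}$, $T_{f,\omega}(\sum_m\alpha_me_m)=\sum_mw_{f(m)}\alpha_{f(m)}e_m$. $[M]=\{1,\dots,M\}$, $f^n$ is the $n$-fold composition, $f(A)=\{f(m):m\in A\}$, $f^{-n}$ the inverse of $f^n$ on $f^n(\mathbb{N})$. For operators $S_1,\dots,S_N$ on a Banach space $Y$: they are d-topologically transitive if for all non-empty open $V_0,U_1,\dots,U_N\subset Y$ there is $n$ with $V_0\cap S_1^{-n}(U_1)\cap\cdots\cap S_N^{-n}(U_N)\ne\emptyset$; they are d-weakly mixing if $S_1\oplus S_1,\dots,S_N\oplus S_N$ are d-topologically transitive. They satisfy the Disjoint Hypercyclicity Criterion if there exist a strictly increasing sequence $(n_k)$, dense subsets $Y_0,Y_1,\dots,Y_N$ of $Y$ and maps $S_{j,k}:Y_j\to Y$ ($1\le j\le N$, $k\in\mathbb{N}$) with: $S_i^{n_k}\to0$ pointwise on $Y_0$; $S_{j,k}\to0$ pointwise on $Y_j$; and $S_i^{n_k}S_{j,k}-\delta_{i,j}\mathrm{Id}\to0$ pointwise on $Y_j$, for all $1\le i,j\le N$. They satisfy the Disjoint Blow-up/Collapse Criterion if there exist a strictly increasing $(n_k)$, a dense $Y_0\subset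 Y$ and maps $S_k:\oplus_{i=1}^NY_0\to Y$ with $S_i^{n_k}y\to0$ for all $y\in Y_0$, $1\le i\le N$, and such that for each $\epsilon>0$, $K\in\mathbb{N}$, $y_1,\dots,y_N\in Y_0$ there is $k\ge K$ with $\|S_k(y_1,\dots,y_N)\|<\epsilon$ and $\|S_i^{n_k}S_k(y_1,\dots,y_N)-y_i\|<\epsilon$ for all $i$. *)

theory Defs
  imports "HOL-Analysis.Analysis"
begin

text \<open>Norms are expressed as distances to the zero point: norm y = d y z,
  and norm (a - b) = d a b.\<close>

definition sp_open :: "'v set \<Rightarrow> ('v \<Rightarrow> 'v \<Rightarrow> real) \<Rightarrow> 'v set \<Rightarrow> bool" where
  "sp_open Y d U \<longleftrightarrow> U \<subseteq> Y \<and> (\<forall>x\<in>U. \<exists>e>0. \<forall>y\<in>Y. d x y < e \<longrightarrow> y \<in> U)"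

definition sp_dense :: "'v set \<Rightarrow> ('v \<Rightarrow> 'v \<Rightarrow> real) \<Rightarrow> 'v set \<Rightarrow> bool" where
  "sp_dense Y d D \<longleftrightarrow> D \<subseteq> Y \<and> (\<forall>y\<in>Y. \<forall>e>0. \<exists>x\<in>D. d y x < e)"

text \<open>Operators S 0, ..., S (N-1) on Y (0-based indexing of the operators).\<close>

definition d_top_transitive ::
  "'v set \<Rightarrow> ('v \<Rightarrow> 'v \<Rightarrow> real) \<Rightarrow> nat \<Rightarrow> (nat \<Rightarrow> 'v \<Rightarrow> 'v) \<Rightarrow> bool" where
  "d_top_transitive Y d N S \<longleftrightarrow>
     (\<forall>V U. sp_open Y d V \<and> V \<noteq> {} \<and> (\<forall>i<N. sp_open Y d (U i) \<and> U i \<noteq> {}) \<longrightarrow>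
        (\<exists>n\<ge>1. \<exists>x\<in>V. \<forall>i<N. (S i ^^ n) x \<in> U i))"

text \<open>R-fold direct sum of (Y, d, z): tuples indexed by r < R (padded with z),
  with the sum metric (equivalent to any product norm).\<close>

definition psum_carrier :: "nat \<Rightarrow> 'v set \<Rightarrow> 'v \<Rightarrow> (nat \<Rightarrow> 'v) set" where
  "psum_carrier R Y z = {x. (\<forall>r<R. x r \<in> Y) \<and> (\<forall>r\<ge>R. x r = z)}"

definition psum_dist :: "nat \<Rightarrow> ('v \<Rightarrow> 'v \<Rightarrow> real) \<Rightarrow> (nat \<Rightarrow> 'v) \<Rightarrow> (nat \<Rightarrow> 'v) \<Rightarrow> real" where
  "psum_dist R d x y = (\<Sum>r<R. d (x r) (y r))"

definition psum_op :: "nat \<Rightarrow> 'v \<Rightarrow> ('v \<Rightarrow> 'v) \<Rightarrow> (nat \<Rightarrow> 'v) \<Rightarrow> (nat \<Rightarrow> 'v)" where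
  "psum_op R z S x = (\<lambda>r. if r < R then S (x r) else z)"

definition d_weakly_mixing ::
  "'v set \<Rightarrow> ('v \<Rightarrow> 'v \<Rightarrow> real) \<Rightarrow> 'v \<Rightarrow> nat \<Rightarrow> (nat \<Rightarrow> 'v \<Rightarrow> 'v) \<Rightarrow> bool" where
  "d_weakly_mixing Y d z N S \<longleftrightarrow>
     d_top_transitive (psum_carrier 2 Y z) (psum_dist 2 d) N (\<lambda>i. psum_op 2 z (S i))"

definition disjoint_hc_criterion ::
  "'v set \<Rightarrow> ('v \<Rightarrow> 'v \<Rightarrow> real) \<Rightarrow> 'v \<Rightarrow> nat \<Rightarrow> (nat \<Rightarrow> 'v \<Rightarrow> 'v) \<Rightarrow> bool" where
  "disjoint_hc_criterion Y d z N S \<longleftrightarrow>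
     (\<exists>(nk :: nat \<Rightarrow> nat) (Y0 :: 'v set) (Ys :: nat \<Rightarrow> 'v set) (Sjk :: nat \<Rightarrow> nat \<Rightarrow> 'v \<Rightarrow> 'v).
        strict_mono nk \<and>
        sp_dense Y d Y0 \<and> (\<forall>j<N. sp_dense Y d (Ys j)) \<and>
        (\<forall>j<N. \<forall>k. \<forall>y\<in>Ys j. Sjk j k y \<in> Y) \<and>
        (\<forall>i<N. \<forall>y\<in>Y0. (\<lambda>k. d ((S i ^^ nk k) y) z) \<longlonglongrightarrow> 0) \<and>
        (\<forall>j<N. \<forall>y\<in>Ys j. (\<lambda>k. d (Sjk j k y) z) \<longlonglongrightarrow> 0) \<and>
        (\<forall>i<N. \<forall>j<N. \<forall>y\<in>Ys j.
            (\<lambda>k. d ((S i ^^ nk k) (Sjk j k y)) (if i = j then y else z)) \<longlonglongrightarrow> 0))"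

definition disjoint_bc_criterion ::
  "'v set \<Rightarrow> ('v \<Rightarrow> 'v \<Rightarrow> real) \<Rightarrow> 'v \<Rightarrow> nat \<Rightarrow> (nat \<Rightarrow> 'v \<Rightarrow> 'v) \<Rightarrow> bool" where
  "disjoint_bc_criterion Y d z N S \<longleftrightarrow>
     (\<exists>(nk :: nat \<Rightarrow> nat) (Y0 :: 'v set) (Sk :: nat \<Rightarrow> (nat \<Rightarrow> 'v) \<Rightarrow> 'v).
        strict_mono nk \<and> sp_dense Y d Y0 \<and>
        (\<forall>k y. (\<forall>i<N. y i \<in> Y0) \<longrightarrow> Sk k y \<in> Y) \<and>
        (\<forall>i<N. \<forall>y\<in>Y0. (\<lambda>k. d ((S i ^^ nk k) y) z) \<longlonglongrightarrow> 0) \<and>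
        (\<forall>\<epsilon>>0. \<forall>K. \<forall>y. (\<forall>i<N. y i \<in> Y0) \<longrightarrow>
            (\<exists>k\<ge>K. d (Sk k y) z < \<epsilon> \<and> (\<forall>i<N. d ((S i ^^ nk k) (Sk k y)) (y i) < \<epsilon>))))"

section \<open>The space l^p and unilateral pseudo-shifts (0-based indices: N = {0,1,...})\<close>

definition lp_space :: "real \<Rightarrow> (nat \<Rightarrow> 'a::real_normed_vector) set" where
  "lp_space p = {x. summable (\<lambda>m. norm (x m) powr p)}"

definition lp_dist :: "real \<Rightarrow> (nat \<Rightarrow> 'a::real_normed_vector) \<Rightarrow> (nat \<Rightarrow> 'a) \<Rightarrow> real" where
  "lp_dist p x y = (\<Sum>m. norm (x m - y m) powr p) powr (1 / p)"

text \<open>(T_{f,w} x)_m = w_{f(m)} x_{f(m)}; only the values w (f m) of the weight matter.\<close>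

definition pshift :: "(nat \<Rightarrow> nat) \<Rightarrow> (nat \<Rightarrow> 'a::real_normed_field) \<Rightarrow> (nat \<Rightarrow> 'a) \<Rightarrow> (nat \<Rightarrow> 'a)" where
  "pshift f w x = (\<lambda>m. w (f m) * x (f m))"

definition pseudo_shift_data :: "(nat \<Rightarrow> nat) \<Rightarrow> (nat \<Rightarrow> 'a::real_normed_field) \<Rightarrow> bool" where
  "pseudo_shift_data f w \<longleftrightarrow> strict_mono f \<and> f 0 > 0 \<and>
     (\<exists>B. \<forall>m. norm (w (f m)) \<le> B) \<and> (\<forall>m. w (f m) \<noteq> 0)"

definition Wprod :: "(nat \<Rightarrow> nat) \<Rightarrow> (nat \<Rightarrow> 'a::real_normed_field) \<Rightarrow> nat \<Rightarrow> nat \<Rightarrow> 'a" where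
  "Wprod f w m n = (\<Prod>\<nu>\<in>{1..n}. w ((f ^^ \<nu>) m))"

end

(* Everything is reduced to a finitary property of the weights, "disjoint blow-up": for every r
   there are arbitrarily large n such that all weight products W(i)_{m,n} with m < r exceed r,
   the images f_i^n([r]) are pairwise disjoint, and wherever f_l^n([r]) meets f_i^n(N - [r])
   the quotient of the weight products is below 1/r.  Condition (iv) is this property along a
   sequence n_k.  Testing d-weak mixing against small balls around the pairs (1_[r], i 1_[r])
   forces disjoint blow-up: the labels i separate the images, and approximating 1_[r] by the
   image of a vector close to 0 makes the weights large.  Conversely, along blow-up exponents
   the right inverses of T_i^(n_k) on finitely supported vectors, which divide by the weight
   products, witness both criteria, and each criterion gives d-weak mixing by a density
   argument. *)

theory Submission
  imports Defs "HOL-Library.Function_Algebras"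
begin

section \<open>Quasi-metric spaces\<close>

definition ball_interior :: "'v set \<Rightarrow> ('v \<Rightarrow> 'v \<Rightarrow> real) \<Rightarrow> 'v \<Rightarrow> real \<Rightarrow> 'v set" where
  "ball_interior Y d c \<delta> = {y\<in>Y. \<exists>e>0. \<forall>y'\<in>Y. d y y' < e \<longrightarrow> d c y' < \<delta>}"

lemma sp_open_ball_interior:
  assumes K: "0 < K" and quasi: "\<And>a b c. a \<in> Y \<Longrightarrow> b \<in> Y \<Longrightarrow> c \<in> Y \<Longrightarrow> d a c \<le> K * (d a b + d b c)"
  shows "sp_open Y d (ball_interior Y d c \<delta>)"
  unfolding sp_open_def
proof (intro conjI ballI)
  show "ball_interior Y d c \<delta> \<subseteq> Y" by (auto simp: ball_interior_def)
  fix y assume "y \<in> ball_interior Y d c \<delta>"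
  then obtain e where y: "y \<in> Y" "e > 0" and e: "\<And>y'. y' \<in> Y \<Longrightarrow> d y y' < e \<Longrightarrow> d c y' < \<delta>"
    by (auto simp: ball_interior_def)
  show "\<exists>e>0. \<forall>y''\<in>Y. d y y'' < e \<longrightarrow> y'' \<in> ball_interior Y d c \<delta>"
  proof (intro exI[of _ "e/(2*K)"] conjI ballI impI)
    show "e/(2*K) > 0" using y K by simp
    fix y'' assume y'': "y'' \<in> Y" "d y y'' < e/(2*K)"
    show "y'' \<in> ball_interior Y d c \<delta>" unfolding ball_interior_def
    proof (intro CollectI conjI exI[of _ "e/(2*K)"] ballI impI)
      fix y' assume y': "y' \<in> Y" "d y'' y' < e/(2*K)"
      have "d y y' \<le> K * (d y y'' + d y'' y')" using quasi y y'' y' by blast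
      also have "\<dots> < K * (e/(2*K) + e/(2*K))" using K y'' y' by (intro mult_strict_left_mono) auto
      also have "\<dots> = e" using K by (simp add: field_simps)
      finally show "d c y' < \<delta>" using e y' by blast
    qed (use y'' y K in auto)
  qed
qed

lemma center_in_ball_interior: "c \<in> Y \<Longrightarrow> 0 < \<delta> \<Longrightarrow> c \<in> ball_interior Y d c \<delta>"
  unfolding ball_interior_def by auto

lemma ball_interior_dist_less: "y \<in> ball_interior Y d c \<delta> \<Longrightarrow> d y y = 0 \<Longrightarrow> d c y < \<delta>"
  unfolding ball_interior_def by auto

lemma sp_denseD: "sp_dense Y d D \<Longrightarrow> y \<in> Y \<Longrightarrow> 0 < e \<Longrightarrow> \<exists>x\<in>D. d y x < e"
  unfolding sp_dense_def by blast

text \<open>The radii of the given open sets absorb the approximation errors through the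
  quasi-triangle inequality.\<close>

lemma d_top_transitive_if_dense_approx:
  assumes K: "0 < K" and quasi: "\<And>a b c. a \<in> Y \<Longrightarrow> b \<in> Y \<Longrightarrow> c \<in> Y \<Longrightarrow> d a c \<le> K * (d a b + d b c)"
    and S: "\<And>i y. i < N \<Longrightarrow> y \<in> Y \<Longrightarrow> S i y \<in> Y"
    and D0: "sp_dense Y d D0" and D: "\<And>i. i < N \<Longrightarrow> sp_dense Y d (D i)"
    and approx: "\<And>v u \<epsilon>. v \<in> D0 \<Longrightarrow> (\<And>i. i < N \<Longrightarrow> u i \<in> D i) \<Longrightarrow> 0 < \<epsilon> \<Longrightarrow>
       \<exists>n\<ge>1. \<exists>x\<in>Y. d v x < \<epsilon> \<and> (\<forall>i<N. d (u i) ((S i ^^ n) x) < \<epsilon>)"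
  shows "d_top_transitive Y d N S"
  unfolding d_top_transitive_def
proof (intro allI impI)
  fix V U assume VU: "sp_open Y d V \<and> V \<noteq> {} \<and> (\<forall>i<N. sp_open Y d (U i) \<and> U i \<noteq> {})"
  have ball: "\<exists>c e. c \<in> W \<and> c \<in> Y \<and> 0 < e \<and> (\<forall>y\<in>Y. d c y < e \<longrightarrow> y \<in> W)"
    if "sp_open Y d W" "W \<noteq> {}" for W
  proof -
    obtain c where "c \<in> W" using \<open>W \<noteq> {}\<close> by blast
    with that(1) show ?thesis unfolding sp_open_def by blast
  qed
  obtain v eV where v: "v \<in> V" "v \<in> Y" "0 < eV" "\<And>y. y \<in> Y \<Longrightarrow> d v y < eV \<Longrightarrow> y \<in> V"
    using ball VU by meson
  have "\<forall>i. \<exists>c e. i < N \<longrightarrow> c \<in> U i \<and> c \<in> Y \<and> 0 < e \<and> (\<forall>y\<in>Y. d c y < e \<longrightarrow> y \<in> U i)"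
    using ball VU by blast
  then obtain u eU where u: "\<And>i. i < N \<Longrightarrow> u i \<in> Y \<and> 0 < eU i \<and> (\<forall>y\<in>Y. d (u i) y < eU i \<longrightarrow> y \<in> U i)"
    by metis
  obtain v' where v': "v' \<in> D0" "d v v' < eV / (2 * K)"
    using sp_denseD[OF D0 v(2), of "eV / (2 * K)"] v(3) K by auto
  have "\<exists>w. i < N \<longrightarrow> w \<in> D i \<and> d (u i) w < eU i / (2 * K)" for i
    using sp_denseD[OF D, of i "u i" "eU i / (2 * K)"] u[of i] K by auto
  then obtain u' where u': "\<And>i. i < N \<Longrightarrow> u' i \<in> D i \<and> d (u i) (u' i) < eU i / (2 * K)"
    by metis
  define \<epsilon> where "\<epsilon> = Min (insert (eV / (2 * K)) ((\<lambda>i. eU i / (2 * K)) ` {..<N}))"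
  have \<epsilon>: "0 < \<epsilon>" "\<epsilon> \<le> eV / (2 * K)" "\<And>i. i < N \<Longrightarrow> \<epsilon> \<le> eU i / (2 * K)"
    unfolding \<epsilon>_def using v(3) u K by simp_all
  obtain n x where n: "n \<ge> 1" and x: "x \<in> Y" "d v' x < \<epsilon>" "\<And>i. i < N \<Longrightarrow> d (u' i) ((S i ^^ n) x) < \<epsilon>"
    using approx[OF v'(1) _ \<epsilon>(1), of u'] u' by blast
  have Sx: "(S i ^^ n) x \<in> Y" if "i < N" for i
    using x(1) by (induction n) (simp_all add: S[OF that])
  show "\<exists>n\<ge>1. \<exists>x\<in>V. \<forall>i<N. (S i ^^ n) x \<in> U i"
  proof (intro exI[of _ n] conjI bexI[of _ x] allI impI n)
    have "v' \<in> Y" using D0 v'(1) unfolding sp_dense_def by blast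
    then have "d v x \<le> K * (d v v' + d v' x)"
      using quasi v(2) x(1) by blast
    also have "\<dots> < K * (eV / (2 * K) + eV / (2 * K))"
      using K v' x \<epsilon> by (intro mult_strict_left_mono) auto
    finally show "x \<in> V" using K v x by simp
    fix i assume i: "i < N"
    have "u' i \<in> Y" using D[OF i] u'[OF i] unfolding sp_dense_def by blast
    then have "d (u i) ((S i ^^ n) x) \<le> K * (d (u i) (u' i) + d (u' i) ((S i ^^ n) x))"
      using quasi u[OF i] Sx[OF i] by blast
    also have "\<dots> < K * (eU i / (2 * K) + eU i / (2 * K))"
      using K u'[OF i] x(3)[OF i] \<epsilon>(3)[OF i] by (intro mult_strict_left_mono) auto
    finally show "(S i ^^ n) x \<in> U i" using K u[OF i] Sx[OF i] by simp
  qed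
qed

section \<open>The quasi-metric space \<open>\<ell>\<^sup>p\<close>\<close>

lemma lp_dist_commute: "lp_dist p x y = lp_dist p y (x :: nat \<Rightarrow> 'a::real_normed_vector)"
  unfolding lp_dist_def by (simp add: norm_minus_commute)

lemma lp_dist_self [simp]: "lp_dist p x (x :: nat \<Rightarrow> 'a::real_normed_vector) = 0"
  unfolding lp_dist_def by simp

lemma lp_dist_nonneg: "0 \<le> lp_dist p x y"
  unfolding lp_dist_def by simp

lemma lp_dist_eq_lp_dist_diff: "lp_dist p x y = lp_dist p (x - y) (\<lambda>_. 0 :: 'a::real_normed_vector)"
  unfolding lp_dist_def by simp

lemma lp_dist_add_right: "lp_dist p a (a + b) = lp_dist p b (\<lambda>_. 0 :: 'a::real_normed_vector)"
  unfolding lp_dist_def by (simp add: norm_minus_commute)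

definition c00 :: "(nat \<Rightarrow> 'a::zero) set" where
  "c00 = {x. \<exists>M. \<forall>m\<ge>M. x m = 0}"

locale lp_exponent =
  fixes p :: real
  assumes one_le_p: "1 \<le> p"
begin

lemma norm_add_powr_le:
  "norm (a + b :: 'a::real_normed_vector) powr p \<le> 2 powr p * (norm a powr p + norm b powr p)"
proof -
  have "norm (a + b) powr p \<le> (2 * max (norm a) (norm b)) powr p"
    using one_le_p norm_triangle_ineq[of a b] by (intro powr_mono2) auto
  also have "\<dots> = 2 powr p * max (norm a) (norm b) powr p" by (simp add: powr_mult)
  also have "max (norm a) (norm b) powr p \<le> norm a powr p + norm b powr p"
    by (cases "norm a \<le> norm b") (auto simp: max_def)
  finally show ?thesis by (simp add: mult_left_mono)
qed

lemma lp_space_add: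
  assumes "x \<in> lp_space p" "y \<in> lp_space p"
  shows "(x + y :: nat \<Rightarrow> 'a::real_normed_vector) \<in> lp_space p"
  unfolding lp_space_def mem_Collect_eq
proof (rule summable_comparison_test)
  show "summable (\<lambda>m. 2 powr p * (norm (x m) powr p + norm (y m) powr p))"
    using assms by (auto simp: lp_space_def intro!: summable_mult summable_add)
qed (use norm_add_powr_le in auto)

lemma lp_space_diff:
  "x \<in> lp_space p \<Longrightarrow> y \<in> lp_space p \<Longrightarrow> (x - y :: nat \<Rightarrow> 'a::real_normed_vector) \<in> lp_space p"
  using lp_space_add[of x "- y"] by (simp add: lp_space_def)

lemma c00_subset_lp_space: "(c00 :: (nat \<Rightarrow> 'a::real_normed_vector) set) \<subseteq> lp_space p"
proof
  fix x :: "nat \<Rightarrow> 'a" assume "x \<in> c00"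
  then obtain M where "\<forall>m\<ge>M. x m = 0" by (auto simp: c00_def)
  then have "summable (\<lambda>m. norm (x m) powr p)"
    by (intro summable_finite[of "{..<M}"]) (auto simp: not_less)
  then show "x \<in> lp_space p" by (simp add: lp_space_def)
qed

lemma lp_space_zero: "(\<lambda>_. 0 :: 'a::real_normed_vector) \<in> lp_space p"
  using c00_subset_lp_space by (auto simp: c00_def)

lemma lp_space_sum:
  "finite A \<Longrightarrow> (\<And>j. j \<in> A \<Longrightarrow> (a j :: nat \<Rightarrow> 'a::real_normed_vector) \<in> lp_space p)
    \<Longrightarrow> (\<Sum>j\<in>A. a j) \<in> lp_space p"
  by (induction A rule: finite_induct) (auto intro: lp_space_add lp_space_zero simp: zero_fun_def)

lemma norm_le_lp_dist:
  assumes "x \<in> lp_space p" "y \<in> lp_space p"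
  shows "norm (x t - y t :: 'a::real_normed_vector) \<le> lp_dist p x y"
proof -
  have "summable (\<lambda>m. norm (x m - y m) powr p)"
    using lp_space_diff[OF assms] by (simp add: lp_space_def)
  from sum_le_suminf[OF this, of "{t}"]
  have "norm (x t - y t) powr p \<le> (\<Sum>m. norm (x m - y m) powr p)" by simp
  then have "(norm (x t - y t) powr p) powr (1/p) \<le> (\<Sum>m. norm (x m - y m) powr p) powr (1/p)"
    using one_le_p by (intro powr_mono2) auto
  then show ?thesis using one_le_p by (simp add: powr_powr lp_dist_def)
qed

lemma lp_dist_quasi_triangle:
  assumes "x \<in> lp_space p" "y \<in> lp_space p" "z \<in> lp_space p"
  shows "lp_dist p x z \<le> 4 * (lp_dist p x y + lp_dist p y (z :: nat \<Rightarrow> 'a::real_normed_vector))"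
proof -
  define A where "A = (\<Sum>m. norm (x m - y m) powr p)"
  define B where "B = (\<Sum>m. norm (y m - z m) powr p)"
  have sA: "summable (\<lambda>m. norm (x m - y m) powr p)"
    and sB: "summable (\<lambda>m. norm (y m - z m) powr p)"
    and sC: "summable (\<lambda>m. norm (x m - z m) powr p)"
    using lp_space_diff assms by (auto simp: lp_space_def)
  have A0: "0 \<le> A" and B0: "0 \<le> B"
    unfolding A_def B_def using sA sB by (auto intro: suminf_nonneg)
  have "(\<Sum>m. norm (x m - z m) powr p)
      \<le> (\<Sum>m. 2 powr p * (norm (x m - y m) powr p + norm (y m - z m) powr p))"
  proof (rule suminf_le)
    show "norm (x m - z m) powr p \<le> 2 powr p * (norm (x m - y m) powr p + norm (y m - z m) powr p)" for m
      using norm_add_powr_le[of "x m - y m" "y m - z m"] by simp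
  qed (use sA sB sC in \<open>auto intro!: summable_mult summable_add\<close>)
  also have "\<dots> = 2 powr p * (A + B)"
    unfolding A_def B_def using sA sB by (simp add: suminf_mult summable_add suminf_add[symmetric])
  finally have "lp_dist p x z \<le> (2 powr p * (A + B)) powr (1/p)"
    unfolding lp_dist_def using one_le_p suminf_nonneg[OF sC] by (intro powr_mono2) auto
  also have "\<dots> = 2 * (A + B) powr (1/p)"
    using one_le_p A0 B0 by (simp add: powr_mult powr_powr)
  also have "(A + B) powr (1/p) \<le> (2 * max A B) powr (1/p)"
    using one_le_p A0 B0 by (intro powr_mono2) auto
  also have "\<dots> = 2 powr (1/p) * max A B powr (1/p)"
    using A0 B0 by (simp add: powr_mult)
  also have "\<dots> \<le> 2 * (A powr (1/p) + B powr (1/p))"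
  proof (rule mult_mono)
    show "2 powr (1/p) \<le> (2::real)" using one_le_p powr_mono[of "1/p" 1 2] by auto
    show "max A B powr (1/p) \<le> A powr (1/p) + B powr (1/p)"
      by (cases "A \<le> B") (auto simp: max_def)
  qed auto
  finally show ?thesis by (simp add: A_def B_def lp_dist_def)
qed

lemma sp_dense_c00: "sp_dense (lp_space p) (lp_dist p) (c00 :: (nat \<Rightarrow> 'a::real_normed_vector) set)"
  unfolding sp_dense_def
proof (intro conjI ballI allI impI c00_subset_lp_space)
  fix x :: "nat \<Rightarrow> 'a" and e :: real assume x: "x \<in> lp_space p" and e: "e > 0"
  have s: "summable (\<lambda>m. norm (x m) powr p)" using x by (simp add: lp_space_def)
  obtain M where M: "norm (\<Sum>i. norm (x (i + M)) powr p) < e powr p"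
    using suminf_exist_split[OF _ s, of "e powr p"] e by auto
  define x' where "x' m = (if m < M then x m else 0)" for m
  have "x' \<in> c00" unfolding c00_def x'_def by (auto intro!: exI[of _ M])
  define g where "g m = norm (x m - x' m) powr p" for m
  have sg: "summable g" unfolding g_def x'_def
    by (rule summable_comparison_test[OF _ s]) auto
  have "suminf g = (\<Sum>n. g (n + M)) + (\<Sum>i<M. g i)" by (rule suminf_split_initial_segment[OF sg])
  also have "\<dots> = (\<Sum>i. norm (x (i + M)) powr p)" by (simp add: g_def x'_def)
  finally have "suminf g powr (1/p) < (e powr p) powr (1/p)"
    using M one_le_p suminf_nonneg[OF sg] by (intro powr_less_mono2) (auto simp: g_def)
  moreover have "lp_dist p x x' = suminf g powr (1/p)"
    unfolding lp_dist_def g_def by (rule refl)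
  ultimately have "lp_dist p x x' < e"
    using one_le_p e by (simp add: powr_powr)
  then show "\<exists>x'\<in>c00. lp_dist p x x' < e" using \<open>x' \<in> c00\<close> by blast
qed

lemma lp_dist_zero_tendsto_add:
  assumes a: "\<And>k. (a k :: nat \<Rightarrow> 'a::real_normed_vector) \<in> lp_space p" and b: "\<And>k. b k \<in> lp_space p"
    and "(\<lambda>k. lp_dist p (a k) (\<lambda>_. 0)) \<longlonglongrightarrow> 0" "(\<lambda>k. lp_dist p (b k) (\<lambda>_. 0)) \<longlonglongrightarrow> 0"
  shows "(\<lambda>k. lp_dist p (a k + b k) (\<lambda>_. 0)) \<longlonglongrightarrow> 0"
proof (rule tendsto_sandwich[of "\<lambda>_. 0" _ _ "\<lambda>k. 4 * (lp_dist p (a k) (\<lambda>_. 0) + lp_dist p (b k) (\<lambda>_. 0))"])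
  have "lp_dist p (a k + b k) (\<lambda>_. 0) \<le> 4 * (lp_dist p (a k + b k) (b k) + lp_dist p (b k) (\<lambda>_. 0))" for k
    using lp_dist_quasi_triangle[OF lp_space_add[OF a b] b lp_space_zero] by simp
  then show "\<forall>\<^sub>F k in sequentially. lp_dist p (a k + b k) (\<lambda>_. 0)
      \<le> 4 * (lp_dist p (a k) (\<lambda>_. 0) + lp_dist p (b k) (\<lambda>_. 0))"
    by (simp add: lp_dist_eq_lp_dist_diff[of p "_ + _"])
  show "(\<lambda>k. 4 * (lp_dist p (a k) (\<lambda>_. 0) + lp_dist p (b k) (\<lambda>_. 0))) \<longlonglongrightarrow> 0"
    using tendsto_mult[OF tendsto_const tendsto_add[OF assms(3,4)], of 4] by simp
qed (simp_all add: lp_dist_nonneg)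

lemma lp_dist_zero_tendsto_sum:
  assumes "finite A" and "\<And>j k. j \<in> A \<Longrightarrow> (a j k :: nat \<Rightarrow> 'a::real_normed_vector) \<in> lp_space p"
    and "\<And>j. j \<in> A \<Longrightarrow> (\<lambda>k. lp_dist p (a j k) (\<lambda>_. 0)) \<longlonglongrightarrow> 0"
  shows "(\<lambda>k. lp_dist p (\<Sum>j\<in>A. a j k) (\<lambda>_. 0)) \<longlonglongrightarrow> 0"
  using assms
proof (induction A rule: finite_induct)
  case (insert j A)
  show ?case
    unfolding sum.insert[OF insert(1,2)]
    by (rule lp_dist_zero_tendsto_add) (use insert in \<open>auto intro: lp_space_sum\<close>)
qed (simp add: zero_fun_def)

end

section \<open>Finite direct sums\<close>

lemma psum_op_funpow:
  "x \<in> psum_carrier R Y z \<Longrightarrow> (psum_op R z S ^^ n) x = (\<lambda>r. if r < R then (S ^^ n) (x r) else z)"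
  by (induction n) (auto simp: psum_carrier_def psum_op_def)

lemma psum_dist_commute:
  "psum_dist R (lp_dist p) x y = psum_dist R (lp_dist p) y (x :: nat \<Rightarrow> nat \<Rightarrow> 'a::real_normed_vector)"
  unfolding psum_dist_def by (simp add: lp_dist_commute[of p "x _"])

lemma psum_dist_self [simp]: "psum_dist R (lp_dist p) x (x :: nat \<Rightarrow> nat \<Rightarrow> 'a::real_normed_vector) = 0"
  by (simp add: psum_dist_def)

lemma lp_dist_le_psum_dist: "r < R \<Longrightarrow> lp_dist p (x r) (y r) \<le> psum_dist R (lp_dist p) x y"
  unfolding psum_dist_def by (rule member_le_sum) (auto simp: lp_dist_nonneg)

lemma psum_dist_add_right:
  "psum_dist R (lp_dist p) a (a + b) = psum_dist R (lp_dist p) b (\<lambda>_ _. 0 :: 'a::real_normed_vector)"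
  unfolding psum_dist_def by (simp add: lp_dist_add_right)

context lp_exponent
begin

lemma psum_dist_quasi_triangle:
  assumes "x \<in> psum_carrier R (lp_space p) z" "y \<in> psum_carrier R (lp_space p) z"
    "w \<in> psum_carrier R (lp_space p) z"
  shows "psum_dist R (lp_dist p) x w
    \<le> 4 * (psum_dist R (lp_dist p) x y + psum_dist R (lp_dist p) y (w :: nat \<Rightarrow> nat \<Rightarrow> 'a::real_normed_vector))"
proof -
  have "(\<Sum>r<R. lp_dist p (x r) (w r)) \<le> (\<Sum>r<R. 4 * (lp_dist p (x r) (y r) + lp_dist p (y r) (w r)))"
    using assms by (intro sum_mono lp_dist_quasi_triangle) (auto simp: psum_carrier_def)
  then show ?thesis by (simp add: psum_dist_def sum_distrib_left sum.distrib)
qed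

lemma sp_dense_psum_carrier:
  assumes D: "sp_dense (lp_space p) (lp_dist p) D"
  shows "sp_dense (psum_carrier R (lp_space p) (\<lambda>_. 0)) (psum_dist R (lp_dist p))
    (psum_carrier R D (\<lambda>_. 0 :: 'a::real_normed_vector))"
  unfolding sp_dense_def
proof (intro conjI ballI allI impI)
  show "psum_carrier R D (\<lambda>_. 0) \<subseteq> psum_carrier R (lp_space p) (\<lambda>_. 0)"
    using D by (auto simp: psum_carrier_def sp_dense_def)
  fix x and e :: real assume x: "x \<in> psum_carrier R (lp_space p) (\<lambda>_. 0 :: 'a)" and e: "0 < e"
  show "\<exists>x'\<in>psum_carrier R D (\<lambda>_. 0). psum_dist R (lp_dist p) x x' < e"
  proof (cases "R = 0")
    case True
    then show ?thesis using e by (auto simp: psum_dist_def psum_carrier_def)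
  next
    case False
    have "\<exists>y. r < R \<longrightarrow> y \<in> D \<and> lp_dist p (x r) y < e / R" for r
      using sp_denseD[OF D, of "x r" "e / R"] x e False by (auto simp: psum_carrier_def)
    then obtain g where g: "\<And>r. r < R \<Longrightarrow> g r \<in> D \<and> lp_dist p (x r) (g r) < e / R" by metis
    define x' where "x' r = (if r < R then g r else (\<lambda>_. 0))" for r
    have "x' \<in> psum_carrier R D (\<lambda>_. 0)" using g by (auto simp: psum_carrier_def x'_def)
    moreover have "psum_dist R (lp_dist p) x x' < (\<Sum>r<R. e / R)"
      unfolding psum_dist_def using False g by (intro sum_strict_mono) (auto simp: x'_def)
    ultimately show ?thesis using False by auto
  qed
qed

end

section \<open>Disjoint mixing of additive operators on \<open>\<ell>\<^sup>p\<close>\<close>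

lemma exists_index_all_less:
  fixes a :: "nat \<Rightarrow> real" and N :: nat
  assumes "a \<longlonglongrightarrow> 0" "\<And>i. i < N \<Longrightarrow> b i \<longlonglongrightarrow> 0" "0 < \<epsilon>"
  shows "\<exists>k\<ge>K. a k < \<epsilon> \<and> (\<forall>i<N. b i k < \<epsilon>)"
proof -
  have "\<forall>\<^sub>F k in sequentially. a k < \<epsilon>"
    using assms(1,3) by (rule order_tendstoD)
  moreover have "\<forall>\<^sub>F k in sequentially. \<forall>i\<in>{..<N}. b i k < \<epsilon>"
  proof (rule eventually_ball_finite)
    show "\<forall>i\<in>{..<N}. \<forall>\<^sub>F k in sequentially. b i k < \<epsilon>"
      using order_tendstoD(2)[OF assms(2) assms(3)] by simp
  qed simp
  moreover have "\<forall>\<^sub>F k in sequentially. K \<le> k"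
    by (rule eventually_ge_at_top)
  ultimately have "\<forall>\<^sub>F k in sequentially. K \<le> k \<and> a k < \<epsilon> \<and> (\<forall>i\<in>{..<N}. b i k < \<epsilon>)"
    by eventually_elim auto
  then obtain M where "\<And>k. M \<le> k \<Longrightarrow> K \<le> k \<and> a k < \<epsilon> \<and> (\<forall>i\<in>{..<N}. b i k < \<epsilon>)"
    unfolding eventually_sequentially by blast
  then show ?thesis by blast
qed

lemma psum_dist_tendsto_zero:
  "(\<And>r. r < R \<Longrightarrow> (\<lambda>k. lp_dist p (x k r) (y k r)) \<longlonglongrightarrow> 0)
    \<Longrightarrow> (\<lambda>k. psum_dist R (lp_dist p) (x k) (y k)) \<longlonglongrightarrow> 0"
  unfolding psum_dist_def by (rule tendsto_null_sum) auto

locale lp_operators = lp_exponent +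
  fixes N :: nat and S :: "nat \<Rightarrow> (nat \<Rightarrow> 'a::real_normed_vector) \<Rightarrow> nat \<Rightarrow> 'a"
  assumes maps_lp_space: "\<And>i x. i < N \<Longrightarrow> x \<in> lp_space p \<Longrightarrow> S i x \<in> lp_space p"
    and additive: "\<And>i x y. i < N \<Longrightarrow> x \<in> lp_space p \<Longrightarrow> y \<in> lp_space p \<Longrightarrow> S i (x + y) = S i x + S i y"
begin

lemma funpow_maps_lp_space: "i < N \<Longrightarrow> x \<in> lp_space p \<Longrightarrow> (S i ^^ n) x \<in> lp_space p"
  by (induction n) (simp_all add: maps_lp_space)

lemma funpow_additive:
  "i < N \<Longrightarrow> x \<in> lp_space p \<Longrightarrow> y \<in> lp_space p \<Longrightarrow> (S i ^^ n) (x + y) = (S i ^^ n) x + (S i ^^ n) y"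
  by (induction n) (simp_all add: additive funpow_maps_lp_space)

lemma funpow_zero:
  assumes "i < N" shows "(S i ^^ n) 0 = 0"
proof -
  have "0 \<in> lp_space p" using lp_space_zero by (simp add: zero_fun_def)
  from funpow_additive[OF assms this this, of n] show ?thesis by simp
qed

lemma funpow_sum:
  "finite A \<Longrightarrow> i < N \<Longrightarrow> (\<And>j. j \<in> A \<Longrightarrow> a j \<in> lp_space p)
    \<Longrightarrow> (S i ^^ n) (\<Sum>j\<in>A. a j) = (\<Sum>j\<in>A. (S i ^^ n) (a j))"
  by (induction A rule: finite_induct) (simp_all add: funpow_zero funpow_additive lp_space_sum)

lemma psum_op_maps_carrier:
  "i < N \<Longrightarrow> x \<in> psum_carrier R (lp_space p) (\<lambda>_. 0)
    \<Longrightarrow> psum_op R (\<lambda>_. 0) (S i) x \<in> psum_carrier R (lp_space p) (\<lambda>_. 0)"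
  by (auto simp: psum_op_def psum_carrier_def maps_lp_space)

lemma psum_op_funpow_maps_carrier:
  "i < N \<Longrightarrow> x \<in> psum_carrier R (lp_space p) (\<lambda>_. 0)
    \<Longrightarrow> (psum_op R (\<lambda>_. 0) (S i) ^^ n) x \<in> psum_carrier R (lp_space p) (\<lambda>_. 0)"
  by (induction n) (simp_all add: psum_op_maps_carrier)

lemma psum_op_funpow_additive:
  assumes "i < N" "x \<in> psum_carrier R (lp_space p) (\<lambda>_. 0)" "y \<in> psum_carrier R (lp_space p) (\<lambda>_. 0)"
  shows "(psum_op R (\<lambda>_. 0) (S i) ^^ n) (x + y)
    = (psum_op R (\<lambda>_. 0) (S i) ^^ n) x + (psum_op R (\<lambda>_. 0) (S i) ^^ n) y"
proof -
  have "x + y \<in> psum_carrier R (lp_space p) (\<lambda>_. 0)"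
    using assms by (auto simp: psum_carrier_def intro: lp_space_add)
  then show ?thesis
    using assms by (auto simp: psum_op_funpow psum_carrier_def funpow_additive)
qed

lemma d_weakly_mixing_if_dense_approx:
  assumes "sp_dense (psum_carrier 2 (lp_space p) (\<lambda>_. 0)) (psum_dist 2 (lp_dist p)) D0"
    and "\<And>i. i < N \<Longrightarrow> sp_dense (psum_carrier 2 (lp_space p) (\<lambda>_. 0)) (psum_dist 2 (lp_dist p)) (D i)"
    and "\<And>v u \<epsilon>. v \<in> D0 \<Longrightarrow> (\<And>i. i < N \<Longrightarrow> u i \<in> D i) \<Longrightarrow> 0 < \<epsilon> \<Longrightarrow>
       \<exists>n\<ge>1. \<exists>x\<in>psum_carrier 2 (lp_space p) (\<lambda>_. 0). psum_dist 2 (lp_dist p) v x < \<epsilon> \<and>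
         (\<forall>i<N. psum_dist 2 (lp_dist p) (u i) ((psum_op 2 (\<lambda>_. 0) (S i) ^^ n) x) < \<epsilon>)"
  shows "d_weakly_mixing (lp_space p) (lp_dist p) (\<lambda>_. 0) N S"
  unfolding d_weakly_mixing_def
proof (rule d_top_transitive_if_dense_approx[where K = 4, OF _ _ _ assms(1,2,3)])
  show "psum_dist 2 (lp_dist p) a c \<le> 4 * (psum_dist 2 (lp_dist p) a b + psum_dist 2 (lp_dist p) b c)"
    if "a \<in> psum_carrier 2 (lp_space p) (\<lambda>_. 0 :: 'a)" "b \<in> psum_carrier 2 (lp_space p) (\<lambda>_. 0)"
      "c \<in> psum_carrier 2 (lp_space p) (\<lambda>_. 0)" for a b c
    using that by (rule psum_dist_quasi_triangle)
qed (simp_all add: psum_op_maps_carrier)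

lemma lp_dist_funpow_sum_tendsto:
  assumes i: "i < N" and v: "v \<in> lp_space p" and v0: "(\<lambda>k. lp_dist p ((S i ^^ nk k) v) (\<lambda>_. 0)) \<longlonglongrightarrow> 0"
    and a: "\<And>j k. j < N \<Longrightarrow> a j k \<in> lp_space p" and y: "\<And>j. j < N \<Longrightarrow> y j \<in> lp_space p"
    and lim: "\<And>j. j < N \<Longrightarrow>
      (\<lambda>k. lp_dist p ((S i ^^ nk k) (a j k)) (if i = j then y j else (\<lambda>_. 0))) \<longlonglongrightarrow> 0"
  shows "(\<lambda>k. lp_dist p ((S i ^^ nk k) (v + (\<Sum>j<N. a j k))) (y i)) \<longlonglongrightarrow> 0"
proof -
  define b where "b j k = (S i ^^ nk k) (a j k) - (if i = j then y j else 0)" for j k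
  have b_lp: "b j k \<in> lp_space p" if "j < N" for j k
    unfolding b_def using that a y lp_space_zero i
    by (auto intro!: lp_space_diff funpow_maps_lp_space simp: zero_fun_def)
  have "(S i ^^ nk k) (v + (\<Sum>j<N. a j k)) - y i = (S i ^^ nk k) v + (\<Sum>j<N. b j k)" for k
  proof -
    have "(\<Sum>j<N. b j k) = (\<Sum>j<N. (S i ^^ nk k) (a j k)) - y i"
      unfolding b_def sum_subtractf using i by simp
    moreover have "(\<Sum>j<N. a j k) \<in> lp_space p"
      using a by (intro lp_space_sum) auto
    moreover have "(S i ^^ nk k) (\<Sum>j<N. a j k) = (\<Sum>j<N. (S i ^^ nk k) (a j k))"
      using a by (intro funpow_sum[OF _ i]) auto
    ultimately show ?thesis
      by (simp add: funpow_additive[OF i v])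
  qed
  then have "lp_dist p ((S i ^^ nk k) (v + (\<Sum>j<N. a j k))) (y i)
      = lp_dist p ((S i ^^ nk k) v + (\<Sum>j<N. b j k)) (\<lambda>_. 0)" for k
    by (simp add: lp_dist_eq_lp_dist_diff[of p "(S i ^^ nk k) _"])
  moreover have "(\<lambda>k. lp_dist p ((S i ^^ nk k) v + (\<Sum>j<N. b j k)) (\<lambda>_. 0)) \<longlonglongrightarrow> 0"
  proof (rule lp_dist_zero_tendsto_add)
    have "lp_dist p (b j k) (\<lambda>_. 0)
        = lp_dist p ((S i ^^ nk k) (a j k)) (if i = j then y j else (\<lambda>_. 0))" for j k
      unfolding b_def by (cases "i = j") (simp_all add: lp_dist_eq_lp_dist_diff[of p _ "y j"])
    then show "(\<lambda>k. lp_dist p (\<Sum>j<N. b j k) (\<lambda>_. 0)) \<longlonglongrightarrow> 0"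
      using lim b_lp by (intro lp_dist_zero_tendsto_sum) auto
  qed (use v0 b_lp i v funpow_maps_lp_space in \<open>auto intro: lp_space_sum\<close>)
  ultimately show ?thesis by simp
qed

lemma d_weakly_mixing_if_disjoint_hc_criterion:
  assumes "disjoint_hc_criterion (lp_space p) (lp_dist p) (\<lambda>_. 0) N S"
  shows "d_weakly_mixing (lp_space p) (lp_dist p) (\<lambda>_. 0) N S"
proof -
  obtain nk Y0 Ys Sjk where nk: "strict_mono nk" and Y0: "sp_dense (lp_space p) (lp_dist p) Y0"
    and Ys: "\<forall>j<N. sp_dense (lp_space p) (lp_dist p) (Ys j)"
    and Sjk: "\<forall>j<N. \<forall>k. \<forall>y\<in>Ys j. Sjk j k y \<in> lp_space p"
    and c1: "\<forall>i<N. \<forall>y\<in>Y0. (\<lambda>k. lp_dist p ((S i ^^ nk k) y) (\<lambda>_. 0)) \<longlonglongrightarrow> 0"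
    and c2: "\<forall>j<N. \<forall>y\<in>Ys j. (\<lambda>k. lp_dist p (Sjk j k y) (\<lambda>_. 0)) \<longlonglongrightarrow> 0"
    and c3: "\<forall>i<N. \<forall>j<N. \<forall>y\<in>Ys j.
       (\<lambda>k. lp_dist p ((S i ^^ nk k) (Sjk j k y)) (if i = j then y else (\<lambda>_. 0))) \<longlonglongrightarrow> 0"
    using assms unfolding disjoint_hc_criterion_def by blast
  note Ys = Ys[rule_format] and Sjk = Sjk[rule_format]
    and c1 = c1[rule_format] and c2 = c2[rule_format] and c3 = c3[rule_format]
  have Y0_lp: "Y0 \<subseteq> lp_space p" and Ys_lp: "\<And>j. j < N \<Longrightarrow> Ys j \<subseteq> lp_space p"
    using Y0 Ys by (auto simp: sp_dense_def)
  show ?thesis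
  proof (rule d_weakly_mixing_if_dense_approx)
    show "sp_dense (psum_carrier 2 (lp_space p) (\<lambda>_. 0)) (psum_dist 2 (lp_dist p)) (psum_carrier 2 Y0 (\<lambda>_. 0))"
      "\<And>i. i < N \<Longrightarrow> sp_dense (psum_carrier 2 (lp_space p) (\<lambda>_. 0)) (psum_dist 2 (lp_dist p))
         (psum_carrier 2 (Ys i) (\<lambda>_. 0))"
      using Y0 Ys by (simp_all add: sp_dense_psum_carrier)
    fix v u and \<epsilon> :: real
    assume v: "v \<in> psum_carrier 2 Y0 (\<lambda>_. 0)" and u: "\<And>i. i < N \<Longrightarrow> u i \<in> psum_carrier 2 (Ys i) (\<lambda>_. 0)"
      and \<epsilon>: "0 < \<epsilon>"
    have v_Y0: "r < 2 \<Longrightarrow> v r \<in> Y0" and u_Ys: "j < N \<Longrightarrow> r < 2 \<Longrightarrow> u j r \<in> Ys j" for r j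
      using v u by (auto simp: psum_carrier_def)
    define s where "s k r = (if r < 2 then \<Sum>j<N. Sjk j k (u j r) else (\<lambda>_. 0))" for k r
    have s_lp: "r < 2 \<Longrightarrow> s k r \<in> lp_space p" for k r
      unfolding s_def using Sjk u_Ys by (auto intro: lp_space_sum)
    have x_in: "v + s k \<in> psum_carrier 2 (lp_space p) (\<lambda>_. 0)" for k
    proof -
      have "v r + s k r \<in> lp_space p" if "r < 2" for r
        using v_Y0[OF that] Y0_lp s_lp[OF that] by (blast intro: lp_space_add)
      moreover have "v r + s k r = (\<lambda>_. 0)" if "\<not> r < 2" for r
        using v that by (simp add: psum_carrier_def s_def zero_fun_def)
      ultimately show ?thesis by (simp add: psum_carrier_def)
    qed
    have dist_v: "(\<lambda>k. psum_dist 2 (lp_dist p) v (v + s k)) \<longlonglongrightarrow> 0"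
      unfolding psum_dist_add_right
    proof (rule psum_dist_tendsto_zero)
      fix r :: nat assume r: "r < 2"
      have "(\<lambda>k. lp_dist p (\<Sum>j<N. Sjk j k (u j r)) (\<lambda>_. 0)) \<longlonglongrightarrow> 0"
        by (rule lp_dist_zero_tendsto_sum) (use r Sjk u_Ys c2 in auto)
      then show "(\<lambda>k. lp_dist p (s k r) (\<lambda>_. 0)) \<longlonglongrightarrow> 0" using r by (simp add: s_def)
    qed
    have dist_u: "(\<lambda>k. psum_dist 2 (lp_dist p) (u i) ((psum_op 2 (\<lambda>_. 0) (S i) ^^ nk k) (v + s k))) \<longlonglongrightarrow> 0"
      if i: "i < N" for i
    proof (rule psum_dist_tendsto_zero)
      fix r :: nat assume r: "r < 2"
      have "(\<lambda>k. lp_dist p ((S i ^^ nk k) (v r + (\<Sum>j<N. Sjk j k (u j r)))) (u i r)) \<longlonglongrightarrow> 0"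
      proof (rule lp_dist_funpow_sum_tendsto[OF i])
        show "v r \<in> lp_space p" using v_Y0[OF r] Y0_lp by blast
        show "(\<lambda>k. lp_dist p ((S i ^^ nk k) (v r)) (\<lambda>_. 0)) \<longlonglongrightarrow> 0" by (rule c1[OF i v_Y0[OF r]])
        show "Sjk j k (u j r) \<in> lp_space p" if "j < N" for j k by (rule Sjk[OF that u_Ys[OF that r]])
        show "u j r \<in> lp_space p" if "j < N" for j using u_Ys[OF that r] Ys_lp[OF that] by blast
        show "(\<lambda>k. lp_dist p ((S i ^^ nk k) (Sjk j k (u j r))) (if i = j then u j r else (\<lambda>_. 0))) \<longlonglongrightarrow> 0"
          if "j < N" for j by (rule c3[OF i that u_Ys[OF that r]])
      qed
      moreover have "((psum_op 2 (\<lambda>_. 0) (S i) ^^ nk k) (v + s k)) r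
          = (S i ^^ nk k) (v r + (\<Sum>j<N. Sjk j k (u j r)))" for k
        using psum_op_funpow[OF x_in] r by (simp add: s_def)
      ultimately show "(\<lambda>k. lp_dist p (u i r) (((psum_op 2 (\<lambda>_. 0) (S i) ^^ nk k) (v + s k)) r)) \<longlonglongrightarrow> 0"
        by (simp add: lp_dist_commute[of p "u i r"])
    qed
    have "\<exists>k\<ge>1. psum_dist 2 (lp_dist p) v (v + s k) < \<epsilon> \<and>
      (\<forall>i<N. psum_dist 2 (lp_dist p) (u i) ((psum_op 2 (\<lambda>_. 0) (S i) ^^ nk k) (v + s k)) < \<epsilon>)"
      by (rule exists_index_all_less[OF dist_v dist_u \<epsilon>])
    then obtain k where k: "k \<ge> 1" "psum_dist 2 (lp_dist p) v (v + s k) < \<epsilon>"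
      "\<forall>i<N. psum_dist 2 (lp_dist p) (u i) ((psum_op 2 (\<lambda>_. 0) (S i) ^^ nk k) (v + s k)) < \<epsilon>"
      by blast
    show "\<exists>n\<ge>1. \<exists>x\<in>psum_carrier 2 (lp_space p) (\<lambda>_. 0). psum_dist 2 (lp_dist p) v x < \<epsilon> \<and>
        (\<forall>i<N. psum_dist 2 (lp_dist p) (u i) ((psum_op 2 (\<lambda>_. 0) (S i) ^^ n) x) < \<epsilon>)"
      using seq_suble[OF nk, of k] x_in k by (intro exI[of _ "nk k"] conjI bexI[of _ "v + s k"]) auto
  qed
qed

end

context lp_operators
begin

lemma d_weakly_mixing_if_disjoint_bc_criterion:
  assumes "disjoint_bc_criterion (psum_carrier 2 (lp_space p) (\<lambda>_. 0)) (psum_dist 2 (lp_dist p))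
    (\<lambda>_ _. 0) N (\<lambda>i. psum_op 2 (\<lambda>_. 0) (S i))"
  shows "d_weakly_mixing (lp_space p) (lp_dist p) (\<lambda>_. 0) N S"
proof -
  let ?C = "psum_carrier 2 (lp_space p) (\<lambda>_. 0 :: 'a)"
  let ?d = "psum_dist 2 (lp_dist p)"
  let ?P = "\<lambda>i. psum_op 2 (\<lambda>_. 0) (S i)"
  obtain nk Y0 Sk where nk: "strict_mono nk" and Y0: "sp_dense ?C ?d Y0"
    and Sk: "\<forall>k y. (\<forall>i<N. y i \<in> Y0) \<longrightarrow> Sk k y \<in> ?C"
    and c1: "\<forall>i<N. \<forall>y\<in>Y0. (\<lambda>k. ?d ((?P i ^^ nk k) y) (\<lambda>_ _. 0)) \<longlonglongrightarrow> 0"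
    and c2: "\<forall>\<epsilon>>0. \<forall>K. \<forall>y. (\<forall>i<N. y i \<in> Y0) \<longrightarrow>
      (\<exists>k\<ge>K. ?d (Sk k y) (\<lambda>_ _. 0) < \<epsilon> \<and> (\<forall>i<N. ?d ((?P i ^^ nk k) (Sk k y)) (y i) < \<epsilon>))"
    using assms unfolding disjoint_bc_criterion_def by blast
  have Y0_C: "Y0 \<subseteq> ?C" using Y0 by (simp add: sp_dense_def)
  show ?thesis
  proof (rule d_weakly_mixing_if_dense_approx[OF Y0 Y0])
    fix v u and \<epsilon> :: real assume v: "v \<in> Y0" and u: "\<And>i. i < N \<Longrightarrow> u i \<in> Y0" and \<epsilon>: "0 < \<epsilon>"
    have "\<forall>\<^sub>F k in sequentially. \<forall>i\<in>{..<N}. ?d ((?P i ^^ nk k) v) (\<lambda>_ _. 0) < \<epsilon> / 8"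
    proof (rule eventually_ball_finite)
      show "\<forall>i\<in>{..<N}. \<forall>\<^sub>F k in sequentially. ?d ((?P i ^^ nk k) v) (\<lambda>_ _. 0) < \<epsilon> / 8"
        using c1 v \<epsilon> by (auto intro: order_tendstoD(2)[of _ 0])
    qed simp
    then obtain K where K: "\<And>k i. K \<le> k \<Longrightarrow> i < N \<Longrightarrow> ?d ((?P i ^^ nk k) v) (\<lambda>_ _. 0) < \<epsilon> / 8"
      unfolding eventually_sequentially by blast
    have "\<exists>k\<ge>max K 1. ?d (Sk k u) (\<lambda>_ _. 0) < \<epsilon> / 8 \<and>
        (\<forall>i<N. ?d ((?P i ^^ nk k) (Sk k u)) (u i) < \<epsilon> / 8)"
      using c2[rule_format, where \<epsilon> = "\<epsilon> / 8" and K = "max K 1" and y = u] u \<epsilon> by simp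
    then obtain k where k: "max K 1 \<le> k" "?d (Sk k u) (\<lambda>_ _. 0) < \<epsilon> / 8"
      "\<And>i. i < N \<Longrightarrow> ?d ((?P i ^^ nk k) (Sk k u)) (u i) < \<epsilon> / 8"
      by blast
    define s where "s = Sk k u"
    have v_C: "v \<in> ?C" and s_C: "s \<in> ?C" and u_C: "\<And>i. i < N \<Longrightarrow> u i \<in> ?C"
      using v u Sk Y0_C by (auto simp: s_def)
    have x_C: "v + s \<in> ?C"
      using v_C s_C by (auto simp: psum_carrier_def intro: lp_space_add)
    show "\<exists>n\<ge>1. \<exists>x\<in>?C. ?d v x < \<epsilon> \<and> (\<forall>i<N. ?d (u i) ((?P i ^^ n) x) < \<epsilon>)"
    proof (intro exI[of _ "nk k"] conjI bexI[of _ "v + s"] allI impI x_C)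
      show "1 \<le> nk k" using seq_suble[OF nk, of k] k(1) by simp
      show "?d v (v + s) < \<epsilon>"
        using k(2) \<epsilon> by (simp add: psum_dist_add_right s_def)
      fix i assume i: "i < N"
      have "?d (u i) ((?P i ^^ nk k) (v + s))
          \<le> 4 * (?d (u i) ((?P i ^^ nk k) s) + ?d ((?P i ^^ nk k) s) ((?P i ^^ nk k) (v + s)))"
        by (rule psum_dist_quasi_triangle[OF u_C[OF i] psum_op_funpow_maps_carrier[OF i s_C]
          psum_op_funpow_maps_carrier[OF i x_C]])
      also have "?d ((?P i ^^ nk k) s) ((?P i ^^ nk k) (v + s)) = ?d ((?P i ^^ nk k) v) (\<lambda>_ _. 0)"
        using i v_C s_C by (simp add: psum_op_funpow_additive add.commute psum_dist_add_right)
      also have "4 * (?d (u i) ((?P i ^^ nk k) s) + ?d ((?P i ^^ nk k) v) (\<lambda>_ _. 0)) < \<epsilon>"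
        using k(1) k(3)[OF i] K[of k i] i by (simp add: psum_dist_commute[of 2 p "u i"] s_def)
      finally show "?d (u i) ((?P i ^^ nk k) (v + s)) < \<epsilon>" .
    qed
  qed
qed

lemma d_weakly_mixing_pointwise_approx:
  assumes wm: "d_weakly_mixing (lp_space p) (lp_dist p) (\<lambda>_. 0) N S"
    and u0: "u0 \<in> psum_carrier 2 (lp_space p) (\<lambda>_. 0)"
    and u: "\<And>i. i < N \<Longrightarrow> u i \<in> psum_carrier 2 (lp_space p) (\<lambda>_. 0)" and \<delta>: "0 < \<delta>"
  obtains n x where "1 \<le> n" "x \<in> psum_carrier 2 (lp_space p) (\<lambda>_. 0)"
    "\<And>\<rho> t. \<rho> < 2 \<Longrightarrow> norm (u0 \<rho> t - x \<rho> t) < \<delta>"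
    "\<And>i \<rho> t. i < N \<Longrightarrow> \<rho> < 2 \<Longrightarrow> norm (u i \<rho> t - (S i ^^ n) (x \<rho>) t) < \<delta>"
proof -
  let ?C = "psum_carrier 2 (lp_space p) (\<lambda>_. 0 :: 'a)"
  let ?d = "psum_dist 2 (lp_dist p)"
  let ?P = "\<lambda>i. psum_op 2 (\<lambda>_. 0) (S i)"
  have open_ball: "sp_open ?C ?d (ball_interior ?C ?d c \<delta>)" for c
    by (rule sp_open_ball_interior[of 4]) (simp, rule psum_dist_quasi_triangle)
  have "sp_open ?C ?d (ball_interior ?C ?d u0 \<delta>) \<and> ball_interior ?C ?d u0 \<delta> \<noteq> {} \<and>
      (\<forall>i<N. sp_open ?C ?d (ball_interior ?C ?d (u i) \<delta>) \<and> ball_interior ?C ?d (u i) \<delta> \<noteq> {})"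
    using open_ball center_in_ball_interior[OF u0 \<delta>] center_in_ball_interior[OF u \<delta>] by blast
  then have "\<exists>n\<ge>1. \<exists>x\<in>ball_interior ?C ?d u0 \<delta>. \<forall>i<N. (?P i ^^ n) x \<in> ball_interior ?C ?d (u i) \<delta>"
    by (rule wm[unfolded d_weakly_mixing_def d_top_transitive_def, rule_format])
  then obtain n x where n: "1 \<le> n" and x: "x \<in> ball_interior ?C ?d u0 \<delta>"
    and Px: "\<And>i. i < N \<Longrightarrow> (?P i ^^ n) x \<in> ball_interior ?C ?d (u i) \<delta>"
    by blast
  have x_C: "x \<in> ?C" using x by (simp add: ball_interior_def)
  have norm_le: "norm (a \<rho> t - b \<rho> t) \<le> ?d a b" if "a \<in> ?C" "b \<in> ?C" "\<rho> < 2" for a b \<rho> t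
    using that norm_le_lp_dist[of "a \<rho>" "b \<rho>" t] lp_dist_le_psum_dist[OF that(3), of p a b]
    by (simp add: psum_carrier_def)
  show thesis
  proof (rule that[OF n x_C])
    show "norm (u0 \<rho> t - x \<rho> t) < \<delta>" if "\<rho> < 2" for \<rho> t
      using norm_le[OF u0 x_C that, of t] ball_interior_dist_less[OF x] by simp
    fix i t and \<rho> :: nat assume i: "i < N" and \<rho>: "\<rho> < 2"
    have Px_C: "(?P i ^^ n) x \<in> ?C" by (rule psum_op_funpow_maps_carrier[OF i x_C])
    have "norm (u i \<rho> t - (?P i ^^ n) x \<rho> t) < \<delta>"
      using norm_le[OF u[OF i] Px_C \<rho>, of t] ball_interior_dist_less[OF Px[OF i]] by simp
    then show "norm (u i \<rho> t - (S i ^^ n) (x \<rho>) t) < \<delta>"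
      using \<rho> by (simp add: psum_op_funpow[OF x_C])
  qed
qed

end

section \<open>Unilateral pseudo-shifts\<close>

lemma strict_mono_funpow: "strict_mono (f :: nat \<Rightarrow> nat) \<Longrightarrow> strict_mono (f ^^ n)"
  by (induction n) (auto simp: strict_mono_def)

lemma add_le_funpow: "(\<And>m. m < f m) \<Longrightarrow> m + n \<le> (f ^^ n) (m :: nat)"
proof (induction n)
  case (Suc n)
  have "(f ^^ n) m < f ((f ^^ n) m)" by (rule Suc.prems)
  with Suc.IH[OF Suc.prems] show ?case by simp
qed simp

lemma pseudo_shift_data_less: "pseudo_shift_data f w \<Longrightarrow> m < f m"
proof (induction m)
  case 0
  then show ?case by (simp add: pseudo_shift_data_def)
next
  case (Suc m)
  then have "f m < f (Suc m)" by (simp add: pseudo_shift_data_def strict_mono_def)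
  with Suc show ?case by simp
qed

lemma pseudo_shift_data_inj_funpow: "pseudo_shift_data f w \<Longrightarrow> inj (f ^^ n)"
  using strict_mono_funpow strict_mono_imp_inj_on unfolding pseudo_shift_data_def by blast

lemma Wprod_0 [simp]: "Wprod f w m 0 = 1"
  by (simp add: Wprod_def)

lemma Wprod_Suc: "Wprod f w m (Suc n) = w (f m) * Wprod f w (f m) n"
proof -
  have "Wprod f w m (Suc n) = w ((f ^^ 1) m) * (\<Prod>\<nu>\<in>{Suc 1..Suc n}. w ((f ^^ \<nu>) m))"
    unfolding Wprod_def by (subst prod.atLeast_Suc_atMost) auto
  also have "(\<Prod>\<nu>\<in>{Suc 1..Suc n}. w ((f ^^ \<nu>) m)) = (\<Prod>\<nu>\<in>{1..n}. w ((f ^^ Suc \<nu>) m))"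
    by (rule prod.shift_bounds_cl_Suc_ivl)
  also have "\<dots> = Wprod f w (f m) n"
    unfolding Wprod_def by (simp add: funpow_swap1)
  finally show ?thesis by simp
qed

lemma Wprod_nonzero: "pseudo_shift_data f w \<Longrightarrow> Wprod f w m n \<noteq> 0"
  by (induction n arbitrary: m) (auto simp: Wprod_Suc pseudo_shift_data_def)

lemma norm_Wprod_le: "(\<And>m. norm (w (f m)) \<le> B) \<Longrightarrow> norm (Wprod f w m n) \<le> B ^ n"
proof (induction n arbitrary: m)
  case (Suc n)
  have "0 \<le> B" using Suc.prems[of m] norm_ge_zero[of "w (f m)"] by linarith
  have "norm (Wprod f w m (Suc n)) = norm (w (f m)) * norm (Wprod f w (f m) n)"
    by (simp add: Wprod_Suc norm_mult)
  also have "\<dots> \<le> B * B ^ n"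
    using Suc \<open>0 \<le> B\<close> by (intro mult_mono) auto
  finally show ?case by simp
qed simp

lemma pshift_funpow: "(pshift f w ^^ n) x = (\<lambda>m. Wprod f w m n * x ((f ^^ n) m))"
proof (induction n)
  case (Suc n)
  have "(pshift f w ^^ Suc n) x = pshift f w ((pshift f w ^^ n) x)" by simp
  also have "\<dots> = (\<lambda>m. Wprod f w m (Suc n) * x ((f ^^ Suc n) m))"
    by (rule ext) (simp add: Suc pshift_def Wprod_Suc funpow_swap1 funpow_Suc_right del: funpow.simps)
  finally show ?case .
qed simp

lemma pshift_add: "pshift f w (x + y) = pshift f w x + pshift f w y"
  by (simp add: pshift_def fun_eq_iff distrib_left)

lemma (in lp_exponent) lp_space_pshift:
  assumes ps: "pseudo_shift_data f w" and x: "(x :: nat \<Rightarrow> 'a::real_normed_field) \<in> lp_space p"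
  shows "pshift f w x \<in> lp_space p"
proof -
  obtain B where B: "\<And>m. norm (w (f m)) \<le> B" using ps by (auto simp: pseudo_shift_data_def)
  have "summable (\<lambda>n. if n \<in> range f then norm (x n) powr p else 0)"
    by (rule summable_comparison_test[OF _ x[unfolded lp_space_def mem_Collect_eq]]) auto
  then have "summable (\<lambda>m. norm (x (f m)) powr p)"
    using summable_mono_reindex[of f "\<lambda>n. if n \<in> range f then norm (x n) powr p else 0"] ps
    by (auto simp: pseudo_shift_data_def)
  then have "summable (\<lambda>m. B powr p * norm (x (f m)) powr p)" by (rule summable_mult)
  then show ?thesis unfolding lp_space_def mem_Collect_eq pshift_def
  proof (rule summable_comparison_test[rotated], intro exI allI impI)
    fix m
    have "norm (w (f m) * x (f m)) powr p = norm (w (f m)) powr p * norm (x (f m)) powr p"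
      by (simp add: norm_mult powr_mult)
    also have "\<dots> \<le> B powr p * norm (x (f m)) powr p"
      using B[of m] one_le_p by (intro mult_right_mono powr_mono2) auto
    finally show "norm (norm (w (f m) * x (f m)) powr p) \<le> B powr p * norm (x (f m)) powr p" by simp
  qed
qed

locale pseudo_shift_family =
  fixes N :: nat and fs :: "nat \<Rightarrow> nat \<Rightarrow> nat" and ws :: "nat \<Rightarrow> nat \<Rightarrow> 'a::real_normed_field"
  assumes pseudo_shift: "\<And>i. i < N \<Longrightarrow> pseudo_shift_data (fs i) (ws i)"

locale lp_pseudo_shifts = lp_exponent + pseudo_shift_family
begin

sublocale lp_operators p N "\<lambda>i. pshift (fs i) (ws i)"
  by unfold_locales (simp_all add: lp_space_pshift pseudo_shift pshift_add)

end

section \<open>The weight condition\<close>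

definition disjoint_weight_condition ::
  "nat \<Rightarrow> (nat \<Rightarrow> nat \<Rightarrow> nat) \<Rightarrow> (nat \<Rightarrow> nat \<Rightarrow> 'a::real_normed_field) \<Rightarrow> bool" where
  "disjoint_weight_condition N fs ws \<longleftrightarrow> (\<exists>nk :: nat \<Rightarrow> nat. strict_mono nk \<and> (\<forall>k. 0 < nk k) \<and>
     (\<forall>m. \<forall>i<N. filterlim (\<lambda>k. norm (Wprod (fs i) (ws i) m (nk k))) at_top sequentially) \<and>
     (\<forall>\<epsilon>>0. \<forall>K M. \<exists>k\<ge>K. \<forall>i<N. \<forall>l<N. i \<noteq> l \<longrightarrow>
        ((fs l ^^ nk k) ` {..<M} \<inter> (fs i ^^ nk k) ` {..<M} = {} \<and>
         (\<forall>j \<in> (fs l ^^ nk k) ` {..<M} \<inter> (fs i ^^ nk k) ` (UNIV - {..<M}).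
            norm (Wprod (fs i) (ws i) (inv (fs i ^^ nk k) j) (nk k)
                  / Wprod (fs l) (ws l) (inv (fs l ^^ nk k) j) (nk k)) < \<epsilon>))))"

text \<open>The weight condition at the single exponent \<open>n\<close>, with \<open>\<epsilon> = 1/r\<close> and \<open>M = r\<close>.\<close>

definition disjoint_blowup ::
  "nat \<Rightarrow> (nat \<Rightarrow> nat \<Rightarrow> nat) \<Rightarrow> (nat \<Rightarrow> nat \<Rightarrow> 'a::real_normed_field) \<Rightarrow> nat \<Rightarrow> nat \<Rightarrow> bool" where
  "disjoint_blowup N fs ws n r \<longleftrightarrow> (\<forall>m<r. \<forall>i<N. real r < norm (Wprod (fs i) (ws i) m n)) \<and>
     (\<forall>i<N. \<forall>l<N. i \<noteq> l \<longrightarrow> (fs l ^^ n) ` {..<r} \<inter> (fs i ^^ n) ` {..<r} = {} \<and>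
        (\<forall>m<r. \<forall>m'. r \<le> m' \<longrightarrow> (fs l ^^ n) m = (fs i ^^ n) m' \<longrightarrow>
            norm (Wprod (fs i) (ws i) m' n / Wprod (fs l) (ws l) m n) * r < 1))"

lemma disjoint_blowupD:
  assumes "disjoint_blowup N fs ws n r"
  shows disjoint_blowup_norm_Wprod:
      "\<And>m i. m < r \<Longrightarrow> i < N \<Longrightarrow> real r < norm (Wprod (fs i) (ws i) m n)"
    and disjoint_blowup_disjoint:
      "\<And>i l. i < N \<Longrightarrow> l < N \<Longrightarrow> i \<noteq> l \<Longrightarrow> (fs l ^^ n) ` {..<r} \<inter> (fs i ^^ n) ` {..<r} = {}"
    and disjoint_blowup_ratio:
      "\<And>i l m m'. i < N \<Longrightarrow> l < N \<Longrightarrow> i \<noteq> l \<Longrightarrow> m < r \<Longrightarrow> r \<le> m' \<Longrightarrow>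
        (fs l ^^ n) m = (fs i ^^ n) m' \<Longrightarrow> norm (Wprod (fs i) (ws i) m' n / Wprod (fs l) (ws l) m n) * r < 1"
  using assms unfolding disjoint_blowup_def by blast+

lemma disjoint_blowup_mono:
  assumes "disjoint_blowup N fs ws n r" "r' \<le> r"
  shows "disjoint_blowup N fs ws n r'"
  unfolding disjoint_blowup_def
proof (intro conjI allI impI)
  fix m i assume "m < r'" "i < N"
  then have "real r < norm (Wprod (fs i) (ws i) m n)"
    using assms(2) by (intro disjoint_blowup_norm_Wprod[OF assms(1)]) auto
  then show "real r' < norm (Wprod (fs i) (ws i) m n)"
    using assms(2) by linarith
next
  fix i l assume il: "i < N" "l < N" "i \<noteq> l"
  have disj: "(fs l ^^ n) ` {..<r} \<inter> (fs i ^^ n) ` {..<r} = {}"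
    using il by (rule disjoint_blowup_disjoint[OF assms(1)])
  have "{..<r'} \<subseteq> {..<r}" using assms(2) by auto
  then have "(fs l ^^ n) ` {..<r'} \<inter> (fs i ^^ n) ` {..<r'} \<subseteq> (fs l ^^ n) ` {..<r} \<inter> (fs i ^^ n) ` {..<r}"
    by (intro Int_mono image_mono)
  with disj show "(fs l ^^ n) ` {..<r'} \<inter> (fs i ^^ n) ` {..<r'} = {}" by simp
  fix m m' assume m: "m < r'" "r' \<le> m'" "(fs l ^^ n) m = (fs i ^^ n) m'"
  have "r \<le> m'"
  proof (rule ccontr)
    assume "\<not> r \<le> m'"
    then have "(fs l ^^ n) m \<in> (fs i ^^ n) ` {..<r}"
      unfolding m(3) by simp
    moreover have "(fs l ^^ n) m \<in> (fs l ^^ n) ` {..<r}"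
      using m(1) assms(2) by simp
    ultimately show False using disj by blast
  qed
  then have "norm (Wprod (fs i) (ws i) m' n / Wprod (fs l) (ws l) m n) * r < 1"
    using m il assms(2) by (intro disjoint_blowup_ratio[OF assms(1)]) auto
  moreover have "norm (Wprod (fs i) (ws i) m' n / Wprod (fs l) (ws l) m n) * r'
      \<le> norm (Wprod (fs i) (ws i) m' n / Wprod (fs l) (ws l) m n) * r"
    using assms(2) by (intro mult_left_mono) auto
  ultimately show "norm (Wprod (fs i) (ws i) m' n / Wprod (fs l) (ws l) m n) * r' < 1" by linarith
qed

text \<open>Since \<open>|W\<^sub>m\<^sub>,\<^sub>n| \<le> B\<^sup>n\<close>, a blow-up beyond \<open>B\<^sup>n\<^sup>0\<close> forces \<open>n \<ge> n\<^sub>0\<close>.\<close>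

lemma disjoint_blowup_exponent_ge:
  assumes "disjoint_blowup N fs ws n r" "0 < r" "i < N"
    and "\<And>m. norm (ws i (fs i m)) \<le> B" "1 \<le> B" "B ^ n0 \<le> r"
  shows "n0 \<le> n"
proof (rule ccontr)
  assume "\<not> n0 \<le> n"
  then have "B ^ n \<le> B ^ n0" using assms(5) by (intro power_increasing) auto
  moreover have "norm (Wprod (fs i) (ws i) 0 n) \<le> B ^ n" using assms(4) by (rule norm_Wprod_le)
  moreover have "real r < norm (Wprod (fs i) (ws i) 0 n)"
    using assms(2,3) by (intro disjoint_blowup_norm_Wprod[OF assms(1)])
  ultimately show False using assms(6) by linarith
qed

lemma strict_mono_sequence_exists:
  assumes "\<And>k n0. \<exists>n\<ge>n0. P k n"
  obtains nk :: "nat \<Rightarrow> nat" where "strict_mono nk" "\<And>k. 0 < nk k" "\<And>k. P k (nk k)"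
proof -
  define h where "h k n0 = (SOME n. P k n \<and> n0 \<le> n)" for k n0
  have h: "P k (h k n0) \<and> n0 \<le> h k n0" for k n0
  proof -
    have "\<exists>n. n0 \<le> n \<and> P k n" using assms by blast
    then have "\<exists>n. P k n \<and> n0 \<le> n" by blast
    then show ?thesis unfolding h_def by (rule someI_ex)
  qed
  define nk where "nk = rec_nat (h 0 1) (\<lambda>k m. h (Suc k) (Suc m))"
  have nk_0: "nk 0 = h 0 1" and nk_Suc: "nk (Suc k) = h (Suc k) (Suc (nk k))" for k
    by (simp_all add: nk_def)
  show thesis
  proof (rule that)
    show "strict_mono nk"
    proof (rule strict_monoI_Suc)
      show "nk k < nk (Suc k)" for k using h[of "Suc k" "Suc (nk k)"] by (simp add: nk_Suc)
    qed
    show "0 < nk k" for k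
    proof (cases k)
      case 0
      then show ?thesis using h[of 0 1] by (simp add: nk_0)
    next
      case (Suc k')
      then show ?thesis using h[of k "Suc (nk k')"] by (simp add: nk_Suc)
    qed
    show "P k (nk k)" for k
      using h by (cases k) (simp_all add: nk_0 nk_Suc)
  qed
qed

context pseudo_shift_family
begin

lemma inj_funpow: "i < N \<Longrightarrow> inj (fs i ^^ n)"
  using pseudo_shift by (rule pseudo_shift_data_inj_funpow)

lemma disjoint_blowup_imp_condition:
  assumes "disjoint_blowup N fs ws n r" "M \<le> r" "1 < real r * \<epsilon>" "i < N" "l < N" "i \<noteq> l"
  shows "(fs l ^^ n) ` {..<M} \<inter> (fs i ^^ n) ` {..<M} = {} \<and>
    (\<forall>j \<in> (fs l ^^ n) ` {..<M} \<inter> (fs i ^^ n) ` (UNIV - {..<M}).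
       norm (Wprod (fs i) (ws i) (inv (fs i ^^ n) j) n / Wprod (fs l) (ws l) (inv (fs l ^^ n) j) n) < \<epsilon>)"
proof (intro conjI ballI)
  have "disjoint_blowup N fs ws n M" using assms(1,2) by (rule disjoint_blowup_mono)
  then show "(fs l ^^ n) ` {..<M} \<inter> (fs i ^^ n) ` {..<M} = {}"
    using assms(4-6) by (rule disjoint_blowup_disjoint)
  fix j assume j: "j \<in> (fs l ^^ n) ` {..<M} \<inter> (fs i ^^ n) ` (UNIV - {..<M})"
  obtain m where m: "m < M" "j = (fs l ^^ n) m" using j by blast
  obtain m' where "m' \<in> UNIV - {..<M}" "j = (fs i ^^ n) m'" using j by blast
  then have m': "M \<le> m'" "j = (fs i ^^ n) m'" by auto
  have "r \<le> m'"
  proof (rule ccontr)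
    assume "\<not> r \<le> m'"
    have "j \<in> (fs l ^^ n) ` {..<r}"
      unfolding m(2) by (rule imageI) (use m(1) assms(2) in simp)
    moreover have "j \<in> (fs i ^^ n) ` {..<r}"
      unfolding m'(2) by (rule imageI) (use \<open>\<not> r \<le> m'\<close> in simp)
    ultimately have "j \<in> (fs l ^^ n) ` {..<r} \<inter> (fs i ^^ n) ` {..<r}" by blast
    then show False using disjoint_blowup_disjoint[OF assms(1,5,4)] assms(6) by blast
  qed
  then have "norm (Wprod (fs i) (ws i) m' n / Wprod (fs l) (ws l) m n) * r < 1"
    using assms(2,4-6) m m' by (intro disjoint_blowup_ratio[OF assms(1)]) auto
  moreover have "inv (fs i ^^ n) j = m'"
    unfolding m'(2) using assms(4) by (simp add: inv_f_f inj_funpow)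
  moreover have "inv (fs l ^^ n) j = m"
    unfolding m(2) using assms(5) by (simp add: inv_f_f inj_funpow)
  moreover have "norm (Wprod (fs i) (ws i) m' n / Wprod (fs l) (ws l) m n) < \<epsilon>"
  proof (rule ccontr)
    assume "\<not> ?thesis"
    then have "\<epsilon> * r \<le> norm (Wprod (fs i) (ws i) m' n / Wprod (fs l) (ws l) m n) * r"
      by (intro mult_right_mono) auto
    with assms(3) \<open>norm (Wprod (fs i) (ws i) m' n / Wprod (fs l) (ws l) m n) * r < 1\<close>
    show False by (simp add: mult.commute)
  qed
  ultimately show "norm (Wprod (fs i) (ws i) (inv (fs i ^^ n) j) n
      / Wprod (fs l) (ws l) (inv (fs l ^^ n) j) n) < \<epsilon>"
    by simp
qed

lemma disjoint_blowup_if_condition: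
  assumes big: "\<And>m i. m < r \<Longrightarrow> i < N \<Longrightarrow> real r < norm (Wprod (fs i) (ws i) m n)"
    and cond: "\<And>i l. i < N \<Longrightarrow> l < N \<Longrightarrow> i \<noteq> l \<Longrightarrow>
      (fs l ^^ n) ` {..<r} \<inter> (fs i ^^ n) ` {..<r} = {} \<and>
      (\<forall>j \<in> (fs l ^^ n) ` {..<r} \<inter> (fs i ^^ n) ` (UNIV - {..<r}).
         norm (Wprod (fs i) (ws i) (inv (fs i ^^ n) j) n / Wprod (fs l) (ws l) (inv (fs l ^^ n) j) n)
           < 1 / (r + 1))"
  shows "disjoint_blowup N fs ws n r"
  unfolding disjoint_blowup_def
proof (intro conjI allI impI big)
  fix i l assume il: "i < N" "l < N" "i \<noteq> l"
  then show "(fs l ^^ n) ` {..<r} \<inter> (fs i ^^ n) ` {..<r} = {}" using cond by blast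
  fix m m' assume m: "m < r" "r \<le> m'" "(fs l ^^ n) m = (fs i ^^ n) m'"
  define j where "j = (fs l ^^ n) m"
  have "j \<in> (fs l ^^ n) ` {..<r}"
    using m(1) unfolding j_def by simp
  moreover have "j \<in> (fs i ^^ n) ` (UNIV - {..<r})"
    using m(2) unfolding j_def m(3) by simp
  ultimately have "j \<in> (fs l ^^ n) ` {..<r} \<inter> (fs i ^^ n) ` (UNIV - {..<r})"
    by (rule IntI)
  then have "norm (Wprod (fs i) (ws i) (inv (fs i ^^ n) j) n
      / Wprod (fs l) (ws l) (inv (fs l ^^ n) j) n) < 1 / (real r + 1)"
    by (rule bspec[OF conjunct2[OF cond[OF il]]])
  moreover have "inv (fs i ^^ n) j = m'" "inv (fs l ^^ n) j = m"
    using m(3) il unfolding j_def by (metis inv_f_f inj_funpow)+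
  ultimately have "norm (Wprod (fs i) (ws i) m' n / Wprod (fs l) (ws l) m n) < 1 / (real r + 1)"
    by simp
  then have "norm (Wprod (fs i) (ws i) m' n / Wprod (fs l) (ws l) m n) * (real r + 1) < 1"
    by (simp add: field_simps)
  moreover have "norm (Wprod (fs i) (ws i) m' n / Wprod (fs l) (ws l) m n) * r
      \<le> norm (Wprod (fs i) (ws i) m' n / Wprod (fs l) (ws l) m n) * (real r + 1)"
    by (intro mult_left_mono) auto
  ultimately show "norm (Wprod (fs i) (ws i) m' n / Wprod (fs l) (ws l) m n) * r < 1"
    by linarith
qed

lemma disjoint_blowup_if_weight_condition:
  assumes "disjoint_weight_condition N fs ws"
  shows "\<exists>n\<ge>n0. disjoint_blowup N fs ws n r"
proof -
  obtain nk where nk: "strict_mono nk"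
    and lim: "\<forall>m. \<forall>i<N. filterlim (\<lambda>k. norm (Wprod (fs i) (ws i) m (nk k))) at_top sequentially"
    and cond: "\<forall>\<epsilon>>0. \<forall>K M. \<exists>k\<ge>K. \<forall>i<N. \<forall>l<N. i \<noteq> l \<longrightarrow>
        ((fs l ^^ nk k) ` {..<M} \<inter> (fs i ^^ nk k) ` {..<M} = {} \<and>
         (\<forall>j \<in> (fs l ^^ nk k) ` {..<M} \<inter> (fs i ^^ nk k) ` (UNIV - {..<M}).
            norm (Wprod (fs i) (ws i) (inv (fs i ^^ nk k) j) (nk k)
                  / Wprod (fs l) (ws l) (inv (fs l ^^ nk k) j) (nk k)) < \<epsilon>))"
    using assms unfolding disjoint_weight_condition_def by blast
  have "\<forall>\<^sub>F k in sequentially. n0 \<le> nk k"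
    unfolding eventually_sequentially using seq_suble[OF nk] le_trans by blast
  moreover have "\<forall>\<^sub>F k in sequentially. \<forall>m\<in>{..<r}. \<forall>i\<in>{..<N}. real r < norm (Wprod (fs i) (ws i) m (nk k))"
  proof (intro eventually_ball_finite ballI)
    fix m i assume "i \<in> {..<N}"
    then show "\<forall>\<^sub>F k in sequentially. real r < norm (Wprod (fs i) (ws i) m (nk k))"
      using lim unfolding filterlim_at_top_dense by blast
  qed simp_all
  ultimately have "\<forall>\<^sub>F k in sequentially. n0 \<le> nk k \<and>
      (\<forall>m\<in>{..<r}. \<forall>i\<in>{..<N}. real r < norm (Wprod (fs i) (ws i) m (nk k)))"
    by (rule eventually_conj)
  then obtain K where K: "\<And>k. K \<le> k \<Longrightarrow> n0 \<le> nk k \<and>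
      (\<forall>m\<in>{..<r}. \<forall>i\<in>{..<N}. real r < norm (Wprod (fs i) (ws i) m (nk k)))"
    unfolding eventually_sequentially by blast
  obtain k where "K \<le> k" and k: "\<forall>i<N. \<forall>l<N. i \<noteq> l \<longrightarrow>
      (fs l ^^ nk k) ` {..<r} \<inter> (fs i ^^ nk k) ` {..<r} = {} \<and>
      (\<forall>j \<in> (fs l ^^ nk k) ` {..<r} \<inter> (fs i ^^ nk k) ` (UNIV - {..<r}).
        norm (Wprod (fs i) (ws i) (inv (fs i ^^ nk k) j) (nk k)
              / Wprod (fs l) (ws l) (inv (fs l ^^ nk k) j) (nk k)) < 1 / (real r + 1))"
    using cond[rule_format, where \<epsilon> = "1 / (real r + 1)" and K = K and M = r] by auto
  have "disjoint_blowup N fs ws (nk k) r"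
    by (rule disjoint_blowup_if_condition) (use K[OF \<open>K \<le> k\<close>] k in simp_all)
  then show ?thesis using K[OF \<open>K \<le> k\<close>] by blast
qed

lemma weight_condition_if_disjoint_blowup:
  assumes "\<And>r n0. \<exists>n\<ge>n0. disjoint_blowup N fs ws n r"
  shows "disjoint_weight_condition N fs ws"
proof -
  obtain nk where nk: "strict_mono nk" "\<And>k. 0 < nk k"
    and blowup: "\<And>k. disjoint_blowup N fs ws (nk k) (Suc k)"
    using strict_mono_sequence_exists[of "\<lambda>k n. disjoint_blowup N fs ws n (Suc k)"] assms by blast
  show ?thesis
    unfolding disjoint_weight_condition_def
  proof (intro exI[of _ nk] conjI allI impI nk)
    fix m i assume i: "i < N"
    have "real k \<le> norm (Wprod (fs i) (ws i) m (nk k))" if "m \<le> k" for k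
    proof -
      have "real (Suc k) < norm (Wprod (fs i) (ws i) m (nk k))"
        using i that by (intro disjoint_blowup_norm_Wprod[OF blowup[of k]]) simp_all
      then show ?thesis by simp
    qed
    then show "filterlim (\<lambda>k. norm (Wprod (fs i) (ws i) m (nk k))) at_top sequentially"
      by (intro filterlim_at_top_mono[OF filterlim_real_sequentially])
        (auto simp: eventually_sequentially)
  next
    fix \<epsilon> :: real and K M assume \<epsilon>: "0 < \<epsilon>"
    obtain k0 :: nat where k0: "1 / \<epsilon> < k0" using reals_Archimedean2 by blast
    define k where "k = max K (max M k0)"
    have "1 / \<epsilon> < real (Suc k)"
      using k0 by (simp add: k_def)
    then have "1 < real (Suc k) * \<epsilon>"
      using \<epsilon> by (simp add: field_simps)
    moreover have "K \<le> k" "M \<le> Suc k" by (simp_all add: k_def)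
    ultimately show "\<exists>k\<ge>K. \<forall>i<N. \<forall>l<N. i \<noteq> l \<longrightarrow>
        ((fs l ^^ nk k) ` {..<M} \<inter> (fs i ^^ nk k) ` {..<M} = {} \<and>
         (\<forall>j \<in> (fs l ^^ nk k) ` {..<M} \<inter> (fs i ^^ nk k) ` (UNIV - {..<M}).
            norm (Wprod (fs i) (ws i) (inv (fs i ^^ nk k) j) (nk k)
                  / Wprod (fs l) (ws l) (inv (fs l ^^ nk k) j) (nk k)) < \<epsilon>))"
      by (intro exI[of _ k] conjI[OF \<open>K \<le> k\<close>] allI impI
          disjoint_blowup_imp_condition[OF blowup[of k] \<open>M \<le> Suc k\<close>])
  qed
qed

end

section \<open>Right inverses of powers of pseudo-shifts\<close>

definition pshift_rinv :: "(nat \<Rightarrow> nat) \<Rightarrow> (nat \<Rightarrow> 'a::real_normed_field) \<Rightarrow> nat \<Rightarrow> (nat \<Rightarrow> 'a) \<Rightarrow> nat \<Rightarrow> 'a" where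
  "pshift_rinv f w n y = (\<lambda>t. if t \<in> range (f ^^ n)
     then y (inv (f ^^ n) t) / Wprod f w (inv (f ^^ n) t) n else 0)"

lemma pshift_rinv_funpow_apply: "inj (f ^^ n) \<Longrightarrow> pshift_rinv f w n y ((f ^^ n) m) = y m / Wprod f w m n"
  unfolding pshift_rinv_def by simp

lemma pshift_rinv_notin_range: "t \<notin> range (f ^^ n) \<Longrightarrow> pshift_rinv f w n y t = 0"
  unfolding pshift_rinv_def by simp

lemma pshift_funpow_rinv: "pseudo_shift_data f w \<Longrightarrow> (pshift f w ^^ n) (pshift_rinv f w n y) = y"
  by (rule ext) (simp add: pshift_funpow pshift_rinv_funpow_apply pseudo_shift_data_inj_funpow Wprod_nonzero)

lemma pshift_funpow_eq_0:
  assumes "pseudo_shift_data f w" "\<And>m. M \<le> m \<Longrightarrow> y m = 0" "M \<le> n"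
  shows "(pshift f w ^^ n) y = 0"
proof (rule ext)
  fix m
  have "m + n \<le> (f ^^ n) m" using add_le_funpow pseudo_shift_data_less[OF assms(1)] by blast
  then show "(pshift f w ^^ n) y m = 0 m" using assms(2,3) by (simp add: pshift_funpow)
qed

lemma tendsto_zero_if_le_div_Suc:
  fixes f :: "nat \<Rightarrow> real"
  assumes "\<And>k. 0 \<le> f k" "\<And>k. M \<le> k \<Longrightarrow> f k \<le> C / real (Suc k)"
  shows "f \<longlonglongrightarrow> 0"
proof (rule tendsto_sandwich[of "\<lambda>_. 0" f sequentially "\<lambda>k. C / real (Suc k)"])
  show "\<forall>\<^sub>F k in sequentially. f k \<le> C / real (Suc k)"
    using assms(2) by (auto simp: eventually_sequentially)
  show "(\<lambda>k. C / real (Suc k)) \<longlonglongrightarrow> 0"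
    using LIMSEQ_Suc[OF lim_const_over_n[of C]] by simp
qed (use assms(1) in simp_all)

context lp_exponent
begin

lemma lp_dist_zero_le_reindex:
  assumes A: "finite A" and \<phi>: "inj_on \<phi> A" "\<phi> ` A \<subseteq> B" and B: "finite B"
    and z: "\<And>t. t \<notin> A \<Longrightarrow> z t = 0" "\<And>a. a \<in> A \<Longrightarrow> norm (z a) \<le> c * norm (y (\<phi> a))"
    and c: "0 \<le> c"
  shows "lp_dist p z (\<lambda>_. 0 :: 'a::real_normed_vector) \<le> c * (\<Sum>m\<in>B. norm (y m) powr p) powr (1/p)"
proof -
  have "summable (\<lambda>t. norm (z t) powr p)"
    using z(1) by (intro summable_finite[OF A]) auto
  then have "0 \<le> (\<Sum>t. norm (z t) powr p)" by (rule suminf_nonneg) simp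
  have "(\<Sum>t. norm (z t) powr p) = (\<Sum>t\<in>A. norm (z t) powr p)"
    using z(1) by (intro suminf_finite A) auto
  also have "\<dots> \<le> (\<Sum>a\<in>A. c powr p * norm (y (\<phi> a)) powr p)"
    using z(2) c one_le_p by (intro sum_mono) (simp add: powr_mult[symmetric] powr_mono2)
  also have "\<dots> = c powr p * (\<Sum>m\<in>\<phi> ` A. norm (y m) powr p)"
    by (simp add: sum_distrib_left sum.reindex[OF \<phi>(1)])
  also have "\<dots> \<le> c powr p * (\<Sum>m\<in>B. norm (y m) powr p)"
    using \<phi>(2) B by (intro mult_left_mono sum_mono2) auto
  finally have "lp_dist p z (\<lambda>_. 0) \<le> (c powr p * (\<Sum>m\<in>B. norm (y m) powr p)) powr (1/p)"
    unfolding lp_dist_def using one_le_p \<open>0 \<le> (\<Sum>t. norm (z t) powr p)\<close> by (intro powr_mono2) auto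
  also have "\<dots> = c * (\<Sum>m\<in>B. norm (y m) powr p) powr (1/p)"
    using c one_le_p by (simp add: powr_mult powr_powr sum_nonneg)
  finally show ?thesis .
qed

end

context lp_pseudo_shifts
begin

lemma pshift_funpow_c00_tendsto:
  assumes "i < N" "y \<in> c00" "strict_mono nk"
  shows "(\<lambda>k. lp_dist p ((pshift (fs i) (ws i) ^^ nk k) y) (\<lambda>_. 0)) \<longlonglongrightarrow> 0"
proof (rule tendsto_eventually)
  obtain M where M: "\<And>m. M \<le> m \<Longrightarrow> y m = 0" using assms(2) by (auto simp: c00_def)
  have zero: "(pshift (fs i) (ws i) ^^ nk k) y = 0" if "M \<le> k" for k
    using pshift_funpow_eq_0[OF pseudo_shift[OF assms(1)] M] seq_suble[OF assms(3), of k] that by simp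
  show "\<forall>\<^sub>F k in sequentially. lp_dist p ((pshift (fs i) (ws i) ^^ nk k) y) (\<lambda>_. 0) = 0"
    unfolding eventually_sequentially by (intro exI[of _ M] allI impI) (simp add: zero zero_fun_def)
qed

lemma pshift_rinv_c00:
  assumes "j < N" "y \<in> c00"
  shows "pshift_rinv (fs j) (ws j) n y \<in> c00"
proof -
  obtain M where M: "\<And>m. M \<le> m \<Longrightarrow> y m = 0" using assms(2) by (auto simp: c00_def)
  have sm: "strict_mono (fs j ^^ n)"
    using pseudo_shift[OF assms(1)] strict_mono_funpow by (auto simp: pseudo_shift_data_def)
  have "pshift_rinv (fs j) (ws j) n y t = 0" if "(fs j ^^ n) M \<le> t" for t
  proof (cases "t \<in> range (fs j ^^ n)")
    case True
    then obtain m where m: "t = (fs j ^^ n) m" by auto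
    then have "M \<le> m" using that sm by (metis not_le strict_mono_less)
    then show ?thesis using m M by (simp add: pshift_rinv_funpow_apply inj_funpow assms(1))
  qed (simp add: pshift_rinv_notin_range)
  then show ?thesis unfolding c00_def by blast
qed

lemma lp_dist_pshift_rinv_le:
  assumes j: "j < N" and blowup: "disjoint_blowup N fs ws n r"
    and y: "\<And>m. M \<le> m \<Longrightarrow> y m = 0" and M: "M \<le> r"
  shows "lp_dist p (pshift_rinv (fs j) (ws j) n y) (\<lambda>_. 0) \<le> 1 / r * (\<Sum>m<M. norm (y m) powr p) powr (1/p)"
proof (rule lp_dist_zero_le_reindex)
  let ?g = "fs j ^^ n"
  show "inj_on (inv ?g) (?g ` {..<M})" "inv ?g ` ?g ` {..<M} \<subseteq> {..<M}"
    using inj_funpow[OF j] by (auto simp: inj_on_def)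
  show "pshift_rinv (fs j) (ws j) n y t = 0" if "t \<notin> ?g ` {..<M}" for t
  proof (cases "t \<in> range ?g")
    case True
    then obtain m where m: "t = ?g m" by auto
    then have "M \<le> m" using that by (auto simp: not_less)
    then show ?thesis using m y by (simp add: pshift_rinv_funpow_apply inj_funpow j)
  qed (simp add: pshift_rinv_notin_range)
  fix t assume "t \<in> ?g ` {..<M}"
  then obtain m where m: "m < M" "t = ?g m" by auto
  then have "real r < norm (Wprod (fs j) (ws j) m n)"
    using j M by (intro disjoint_blowup_norm_Wprod[OF blowup]) auto
  then have "norm (y m) / norm (Wprod (fs j) (ws j) m n) \<le> 1 / r * norm (y m)"
    using m M by (simp add: divide_simps mult_left_mono)
  then show "norm (pshift_rinv (fs j) (ws j) n y t) \<le> 1 / r * norm (y (inv ?g t))"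
    using m(2) inj_funpow[OF j] by (simp add: pshift_rinv_funpow_apply norm_divide)
qed auto

text \<open>The cross terms \<open>T\<^sub>i\<^sup>n R\<^sub>j y\<close> pick up the ratios \<open>W\<^sup>(\<^sup>i\<^sup>)/W\<^sup>(\<^sup>j\<^sup>)\<close> at
  the collisions \<open>f\<^sub>i\<^sup>n(m') = f\<^sub>j\<^sup>n(m)\<close>, which disjoint blow-up makes small.\<close>

lemma lp_dist_pshift_funpow_rinv_le:
  assumes i: "i < N" and j: "j < N" and ij: "i \<noteq> j" and blowup: "disjoint_blowup N fs ws n r"
    and y: "\<And>m. M \<le> m \<Longrightarrow> y m = 0" and M: "M \<le> r"
  shows "lp_dist p ((pshift (fs i) (ws i) ^^ n) (pshift_rinv (fs j) (ws j) n y)) (\<lambda>_. 0)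
    \<le> 1 / r * (\<Sum>m<M. norm (y m) powr p) powr (1/p)"
proof -
  let ?g = "fs j ^^ n" and ?h = "fs i ^^ n"
  let ?z = "(pshift (fs i) (ws i) ^^ n) (pshift_rinv (fs j) (ws j) n y)"
  define A where "A = {m'. ?h m' \<in> ?g ` {..<M}}"
  have z: "?z m' = Wprod (fs i) (ws i) m' n * pshift_rinv (fs j) (ws j) n y (?h m')" for m'
    by (simp add: pshift_funpow)
  have g_inv: "?g (inv ?g (?h m')) = ?h m'" "inv ?g (?h m') < M" if "m' \<in> A" for m'
    using that inj_funpow[OF j] unfolding A_def by (auto simp: inv_f_f)
  show ?thesis
  proof (rule lp_dist_zero_le_reindex)
    have "A \<subseteq> {..<?g M}"
    proof
      fix m' assume "m' \<in> A"
      have "m' + n \<le> ?h m'" by (rule add_le_funpow) (rule pseudo_shift_data_less[OF pseudo_shift[OF i]])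
      moreover have "?h m' < ?g M"
        using g_inv[OF \<open>m' \<in> A\<close>] strict_mono_funpow pseudo_shift[OF j]
        by (metis pseudo_shift_data_def strict_mono_less)
      ultimately show "m' \<in> {..<?g M}" by simp
    qed
    then show "finite A" by (rule finite_subset) simp
    show "inj_on (\<lambda>m'. inv ?g (?h m')) A"
    proof (rule inj_onI)
      fix a b assume "a \<in> A" "b \<in> A" "inv ?g (?h a) = inv ?g (?h b)"
      then have "?h a = ?h b" using g_inv(1) by metis
      then show "a = b" using inj_funpow[OF i] by (simp add: inj_eq)
    qed
    show "(\<lambda>m'. inv ?g (?h m')) ` A \<subseteq> {..<M}" using g_inv by auto
    show "?z t = 0" if "t \<notin> A" for t
    proof (cases "?h t \<in> range ?g")
      case True
      then obtain m where m: "?h t = ?g m" by auto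
      then have "M \<le> m" using that by (auto simp: A_def not_less)
      then show ?thesis using m y z by (simp add: pshift_rinv_funpow_apply inj_funpow j)
    qed (simp add: z pshift_rinv_notin_range)
    fix m' assume m': "m' \<in> A"
    define m where "m = inv ?g (?h m')"
    have m: "m < M" "?g m = ?h m'" using g_inv[OF m'] by (simp_all add: m_def)
    have "r \<le> m'"
    proof (rule ccontr)
      assume "\<not> r \<le> m'"
      then have "?h m' \<in> ?g ` {..<r} \<inter> ?h ` {..<r}" using m M by (auto intro: image_eqI[of _ _ m])
      then show False using disjoint_blowup_disjoint[OF blowup i j ij] by blast
    qed
    then have ratio: "norm (Wprod (fs i) (ws i) m' n / Wprod (fs j) (ws j) m n) * r < 1"
      using i j ij m M by (intro disjoint_blowup_ratio[OF blowup]) auto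
    have "norm (?z m') = norm (Wprod (fs i) (ws i) m' n / Wprod (fs j) (ws j) m n) * norm (y m)"
      using z[of m'] m(2) pshift_rinv_funpow_apply[OF inj_funpow[OF j], where n = n and w = "ws j" and y = y and m = m]
      by (simp add: norm_mult norm_divide)
    also have "\<dots> \<le> 1 / r * norm (y m)"
      using ratio m(1) M by (intro mult_right_mono) (simp_all add: field_simps)
    finally show "norm (?z m') \<le> 1 / r * norm (y (inv ?g (?h m')))" by (simp add: m_def)
  qed auto
qed

lemma pshift_rinv_tendsto:
  assumes "j < N" "y \<in> c00" "\<And>k. disjoint_blowup N fs ws (nk k) (Suc k)"
  shows "(\<lambda>k. lp_dist p (pshift_rinv (fs j) (ws j) (nk k) y) (\<lambda>_. 0)) \<longlonglongrightarrow> 0"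
proof -
  obtain M where M: "\<And>m. M \<le> m \<Longrightarrow> y m = 0" using assms(2) by (auto simp: c00_def)
  show ?thesis
  proof (rule tendsto_zero_if_le_div_Suc[where M = M])
    fix k assume "M \<le> k"
    then have Mk: "M \<le> Suc k" by simp
    have "lp_dist p (pshift_rinv (fs j) (ws j) (nk k) y) (\<lambda>_. 0)
        \<le> 1 / real (Suc k) * (\<Sum>m<M. norm (y m) powr p) powr (1/p)"
      by (rule lp_dist_pshift_rinv_le[where M = M and y = y, OF assms(1) assms(3) M Mk])
    then show "lp_dist p (pshift_rinv (fs j) (ws j) (nk k) y) (\<lambda>_. 0)
        \<le> (\<Sum>m<M. norm (y m) powr p) powr (1/p) / real (Suc k)"
      by simp
  qed (rule lp_dist_nonneg)
qed

lemma pshift_funpow_rinv_tendsto: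
  assumes "i < N" "j < N" "i \<noteq> j" "y \<in> c00" "\<And>k. disjoint_blowup N fs ws (nk k) (Suc k)"
  shows "(\<lambda>k. lp_dist p ((pshift (fs i) (ws i) ^^ nk k) (pshift_rinv (fs j) (ws j) (nk k) y)) (\<lambda>_. 0))
    \<longlonglongrightarrow> 0"
proof -
  obtain M where M: "\<And>m. M \<le> m \<Longrightarrow> y m = 0" using assms(4) by (auto simp: c00_def)
  show ?thesis
  proof (rule tendsto_zero_if_le_div_Suc[where M = M])
    fix k assume "M \<le> k"
    then have Mk: "M \<le> Suc k" by simp
    have "lp_dist p ((pshift (fs i) (ws i) ^^ nk k) (pshift_rinv (fs j) (ws j) (nk k) y)) (\<lambda>_. 0)
        \<le> 1 / real (Suc k) * (\<Sum>m<M. norm (y m) powr p) powr (1/p)"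
      by (rule lp_dist_pshift_funpow_rinv_le[where M = M and y = y, OF assms(1-3) assms(5) M Mk])
    then show "lp_dist p ((pshift (fs i) (ws i) ^^ nk k) (pshift_rinv (fs j) (ws j) (nk k) y)) (\<lambda>_. 0)
        \<le> (\<Sum>m<M. norm (y m) powr p) powr (1/p) / real (Suc k)"
      by simp
  qed (rule lp_dist_nonneg)
qed

end

section \<open>Criteria from disjoint blow-up\<close>

context lp_pseudo_shifts
begin

lemma disjoint_blowup_sequence:
  assumes "\<And>r n0. \<exists>n\<ge>n0. disjoint_blowup N fs ws n r"
  obtains nk where "strict_mono nk" "\<And>k. disjoint_blowup N fs ws (nk k) (Suc k)"
  by (rule strict_mono_sequence_exists[where P = "\<lambda>k n. disjoint_blowup N fs ws n (Suc k)", OF assms])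
    (rule that)

lemma pshift_rinv_lp_space: "j < N \<Longrightarrow> y \<in> c00 \<Longrightarrow> pshift_rinv (fs j) (ws j) n y \<in> lp_space p"
  by (rule subsetD[OF c00_subset_lp_space pshift_rinv_c00])

lemma disjoint_hc_criterion_if_blowup:
  assumes "\<And>r n0. \<exists>n\<ge>n0. disjoint_blowup N fs ws n r"
  shows "disjoint_hc_criterion (lp_space p) (lp_dist p) (\<lambda>_. 0) N (\<lambda>i. pshift (fs i) (ws i))"
proof -
  obtain nk where nk: "strict_mono nk" and blowup: "\<And>k. disjoint_blowup N fs ws (nk k) (Suc k)"
    by (erule disjoint_blowup_sequence[OF assms])
  show ?thesis
    unfolding disjoint_hc_criterion_def
  proof (intro exI[of _ nk] exI[of _ c00] exI[of _ "\<lambda>_. c00"]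
      exI[of _ "\<lambda>j k. pshift_rinv (fs j) (ws j) (nk k)"] conjI allI impI ballI nk sp_dense_c00)
    fix j k and y :: "nat \<Rightarrow> 'a" assume "j < N" "y \<in> c00"
    then show "pshift_rinv (fs j) (ws j) (nk k) y \<in> lp_space p"
      by (rule pshift_rinv_lp_space)
  next
    fix i and y :: "nat \<Rightarrow> 'a" assume "i < N" "y \<in> c00"
    then show "(\<lambda>k. lp_dist p ((pshift (fs i) (ws i) ^^ nk k) y) (\<lambda>_. 0)) \<longlonglongrightarrow> 0"
      using nk by (rule pshift_funpow_c00_tendsto)
  next
    fix j and y :: "nat \<Rightarrow> 'a" assume "j < N" "y \<in> c00"
    then show "(\<lambda>k. lp_dist p (pshift_rinv (fs j) (ws j) (nk k) y) (\<lambda>_. 0)) \<longlonglongrightarrow> 0"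
      using blowup by (rule pshift_rinv_tendsto)
  next
    fix i j and y :: "nat \<Rightarrow> 'a" assume ij: "i < N" "j < N" and y: "y \<in> c00"
    show "(\<lambda>k. lp_dist p ((pshift (fs i) (ws i) ^^ nk k) (pshift_rinv (fs j) (ws j) (nk k) y))
        (if i = j then y else (\<lambda>_. 0))) \<longlonglongrightarrow> 0"
    proof (cases "i = j")
      case True
      then show ?thesis using pseudo_shift[OF ij(2)] by (simp add: pshift_funpow_rinv)
    next
      case False
      then show ?thesis using pshift_funpow_rinv_tendsto[OF ij False y blowup] by simp
    qed
  qed
qed

lemma pshift_funpow_sum_rinv_tendsto:
  assumes i: "i < N" and y: "\<And>j. j < N \<Longrightarrow> y j \<in> c00"
    and blowup: "\<And>k. disjoint_blowup N fs ws (nk k) (Suc k)"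
  shows "(\<lambda>k. lp_dist p ((pshift (fs i) (ws i) ^^ nk k) (\<Sum>j<N. pshift_rinv (fs j) (ws j) (nk k) (y j))) (y i))
    \<longlonglongrightarrow> 0"
proof -
  have "(\<lambda>k. lp_dist p ((pshift (fs i) (ws i) ^^ nk k) (0 + (\<Sum>j<N. pshift_rinv (fs j) (ws j) (nk k) (y j))))
      (y i)) \<longlonglongrightarrow> 0"
  proof (rule lp_dist_funpow_sum_tendsto[OF i])
    show "0 \<in> lp_space p" using lp_space_zero by (simp add: zero_fun_def)
    show "(\<lambda>k. lp_dist p ((pshift (fs i) (ws i) ^^ nk k) 0) (\<lambda>_. 0)) \<longlonglongrightarrow> 0"
      using i by (simp add: funpow_zero lp_dist_def)
    show "pshift_rinv (fs j) (ws j) (nk k) (y j) \<in> lp_space p" if "j < N" for j k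
      using that y[OF that] by (rule pshift_rinv_lp_space)
    show "y j \<in> lp_space p" if "j < N" for j
      using y[OF that] c00_subset_lp_space by blast
    show "(\<lambda>k. lp_dist p ((pshift (fs i) (ws i) ^^ nk k) (pshift_rinv (fs j) (ws j) (nk k) (y j)))
        (if i = j then y j else (\<lambda>_. 0))) \<longlonglongrightarrow> 0" if j: "j < N" for j
    proof (cases "i = j")
      case True
      then show ?thesis using pseudo_shift[OF j] by (simp add: pshift_funpow_rinv)
    next
      case False
      then show ?thesis using pshift_funpow_rinv_tendsto[OF i j False y[OF j] blowup] by simp
    qed
  qed
  then show ?thesis by simp
qed

lemma disjoint_bc_criterion_if_blowup:
  assumes "\<And>r n0. \<exists>n\<ge>n0. disjoint_blowup N fs ws n r"
  shows "disjoint_bc_criterion (psum_carrier R (lp_space p) (\<lambda>_. 0)) (psum_dist R (lp_dist p)) (\<lambda>_ _. 0) N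
    (\<lambda>i. psum_op R (\<lambda>_. 0) (pshift (fs i) (ws i)))"
proof -
  let ?T = "\<lambda>i. pshift (fs i) (ws i)"
  let ?P = "\<lambda>i. psum_op R (\<lambda>_. 0) (?T i)"
  let ?d = "psum_dist R (lp_dist p)"
  obtain nk where nk: "strict_mono nk" and blowup: "\<And>k. disjoint_blowup N fs ws (nk k) (Suc k)"
    by (erule disjoint_blowup_sequence[OF assms])
  define Y0 where "Y0 = psum_carrier R (c00 :: (nat \<Rightarrow> 'a) set) (\<lambda>_. 0)"
  define Sk where "Sk k y = (\<lambda>r. if r < R then \<Sum>j<N. pshift_rinv (fs j) (ws j) (nk k) (y j r) else (\<lambda>_. 0))"
    for k and y :: "nat \<Rightarrow> nat \<Rightarrow> nat \<Rightarrow> 'a"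
  have Y0_c00: "y \<in> Y0 \<Longrightarrow> r < R \<Longrightarrow> y r \<in> c00" for y r
    by (simp add: Y0_def psum_carrier_def)
  have Y0_carrier: "Y0 \<subseteq> psum_carrier R (lp_space p) (\<lambda>_. 0)"
    unfolding Y0_def psum_carrier_def using c00_subset_lp_space by blast
  have Sk_carrier: "Sk k y \<in> psum_carrier R (lp_space p) (\<lambda>_. 0)" if "\<forall>i<N. y i \<in> Y0" for k y
    using that by (auto simp: Sk_def psum_carrier_def Y0_c00 pshift_rinv_lp_space intro!: lp_space_sum)
  have Sk_small: "(\<lambda>k. ?d (Sk k y) (\<lambda>_ _. 0)) \<longlonglongrightarrow> 0" if y: "\<forall>i<N. y i \<in> Y0" for y
  proof (rule psum_dist_tendsto_zero)
    fix r assume r: "r < R"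
    have "(\<lambda>k. lp_dist p (\<Sum>j<N. pshift_rinv (fs j) (ws j) (nk k) (y j r)) (\<lambda>_. 0)) \<longlonglongrightarrow> 0"
      using y r by (intro lp_dist_zero_tendsto_sum pshift_rinv_tendsto[OF _ _ blowup] pshift_rinv_lp_space)
        (auto simp: Y0_c00)
    then show "(\<lambda>k. lp_dist p (Sk k y r) (\<lambda>_. 0)) \<longlonglongrightarrow> 0" using r by (simp add: Sk_def)
  qed
  have Sk_hits: "(\<lambda>k. ?d ((?P i ^^ nk k) (Sk k y)) (y i)) \<longlonglongrightarrow> 0"
    if y: "\<forall>i<N. y i \<in> Y0" and i: "i < N" for y i
  proof (rule psum_dist_tendsto_zero)
    fix r assume r: "r < R"
    have "((?P i ^^ nk k) (Sk k y)) r = (?T i ^^ nk k) (\<Sum>j<N. pshift_rinv (fs j) (ws j) (nk k) (y j r))"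
      for k using psum_op_funpow[OF Sk_carrier[OF y]] r by (simp add: Sk_def)
    then show "(\<lambda>k. lp_dist p (((?P i ^^ nk k) (Sk k y)) r) (y i r)) \<longlonglongrightarrow> 0"
      using pshift_funpow_sum_rinv_tendsto[OF i _ blowup, of "\<lambda>j. y j r"] y r Y0_c00 by simp
  qed
  show ?thesis
    unfolding disjoint_bc_criterion_def
  proof (intro exI[of _ nk] exI[of _ Y0] exI[of _ Sk] conjI allI impI ballI nk)
    show "sp_dense (psum_carrier R (lp_space p) (\<lambda>_. 0)) ?d Y0"
      unfolding Y0_def by (rule sp_dense_psum_carrier[OF sp_dense_c00])
    show "Sk k y \<in> psum_carrier R (lp_space p) (\<lambda>_. 0)" if "\<forall>i<N. y i \<in> Y0" for k y
      using that by (rule Sk_carrier)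
  next
    fix i y assume i: "i < N" and y: "y \<in> Y0"
    show "(\<lambda>k. ?d ((?P i ^^ nk k) y) (\<lambda>_ _. 0)) \<longlonglongrightarrow> 0"
    proof (rule psum_dist_tendsto_zero)
      fix r assume "r < R"
      then show "(\<lambda>k. lp_dist p (((?P i ^^ nk k) y) r) (\<lambda>_. 0)) \<longlonglongrightarrow> 0"
        using pshift_funpow_c00_tendsto[OF i Y0_c00[OF y] nk] Y0_carrier y
        by (simp add: psum_op_funpow[of y R "lp_space p"] subset_iff)
    qed
  next
    fix \<epsilon> :: real and K y assume "0 < \<epsilon>" "\<forall>i<N. y i \<in> Y0"
    then show "\<exists>k\<ge>K. ?d (Sk k y) (\<lambda>_ _. 0) < \<epsilon> \<and> (\<forall>i<N. ?d ((?P i ^^ nk k) (Sk k y)) (y i) < \<epsilon>)"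
      using Sk_small Sk_hits by (intro exists_index_all_less) auto
  qed
qed

end

section \<open>Disjoint blow-up from d-weak mixing\<close>

lemma norm_factor_gt_if_approx_one:
  fixes W a :: "'a::real_normed_field"
  assumes "norm (1 - W * a) < \<delta>" "norm a < \<delta>"
  shows "1 - \<delta> < norm W * \<delta>"
proof -
  have "norm (1::'a) \<le> norm (1 - W * a) + norm (W * a)"
    using norm_triangle_ineq[of "1 - W * a" "W * a"] by simp
  then have "1 - \<delta> < norm (W * a)" using assms(1) by simp
  also have "\<dots> \<le> norm W * \<delta>"
    using assms(2) by (simp add: norm_mult mult_left_mono)
  finally show ?thesis .
qed

lemma norm_divide_lt_if_approx:
  fixes A C a :: "'a::real_normed_field"
  assumes "norm (1 - A * a) < \<delta>" "norm (0 - C * a) < \<delta>" "\<delta> \<le> 1/2"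
  shows "norm (C / A) < 2 * \<delta>"
proof -
  have "norm (1::'a) \<le> norm (1 - A * a) + norm (A * a)"
    using norm_triangle_ineq[of "1 - A * a" "A * a"] by simp
  then have Aa: "1/2 < norm (A * a)" using assms by simp
  then have "A \<noteq> 0" by auto
  then have "norm (C / A) * norm (A * a) = norm (C * a)" by (simp add: norm_mult norm_divide)
  also have "\<dots> < \<delta>" using assms(2) by simp
  finally have "norm (C / A) * norm (A * a) < \<delta>" .
  moreover have "norm (C / A) * (1/2) \<le> norm (C / A) * norm (A * a)"
    using Aa by (intro mult_left_mono) auto
  ultimately show ?thesis by simp
qed

text \<open>If \<open>A a \<approx> 1\<close>, \<open>C a \<approx> 1\<close>, \<open>A b \<approx> c\<^sub>l\<close> and \<open>C b \<approx> c\<^sub>i\<close>, then both \<open>c\<^sub>i\<close> and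
  \<open>c\<^sub>l\<close> approximate \<open>(A a)(C b) = (C a)(A b)\<close>.\<close>

lemma norm_diff_lt_if_cross_approx:
  fixes A C a b ci cl :: "'a::real_normed_field"
  assumes 1: "norm (1 - A * a) < \<delta>" and 2: "norm (1 - C * a) < \<delta>" and 3: "norm (cl - A * b) < \<delta>"
    and 4: "norm (ci - C * b) < \<delta>" and \<delta>: "\<delta> \<le> 1" and ci: "norm ci \<le> K" and cl: "norm cl \<le> K"
  shows "norm (ci - cl) < 2 * \<delta> * (K + 2)"
proof -
  have approx: "norm (X * Y - c) < \<delta> * (K + 2)"
    if X: "norm (1 - X) < \<delta>" and Y: "norm (c - Y) < \<delta>" and c: "norm c \<le> K" for X Y c :: 'a
  proof -
    have "X * Y - c = (X - 1) * Y + (Y - c)" by (simp add: algebra_simps)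
    then have "norm (X * Y - c) \<le> norm (X - 1) * norm Y + norm (Y - c)"
      by (metis norm_mult norm_triangle_ineq)
    moreover have "norm Y \<le> K + 1"
      using norm_triangle_ineq[of c "Y - c"] c Y \<delta> by (simp add: norm_minus_commute)
    moreover have "norm (X - 1) \<le> \<delta>" "norm (Y - c) < \<delta>"
      using X Y by (simp_all add: norm_minus_commute)
    ultimately have "norm (X * Y - c) < \<delta> * (K + 1) + \<delta>"
      by (smt (verit, best) mult_mono norm_ge_zero)
    then show ?thesis by (simp add: algebra_simps)
  qed
  define P where "P = (A * a) * (C * b)"
  have "norm (P - ci) < \<delta> * (K + 2)" unfolding P_def using approx[OF 1 4 ci] .
  moreover have "P = (C * a) * (A * b)" by (simp add: P_def ac_simps)
  then have "norm (P - cl) < \<delta> * (K + 2)" using approx[OF 2 3 cl] by simp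
  moreover have "norm (ci - cl) \<le> norm (P - ci) + norm (P - cl)"
    using norm_triangle_ineq[of "ci - P" "P - cl"] by (simp add: norm_minus_commute)
  ultimately have "norm (ci - cl) < \<delta> * (K + 2) + \<delta> * (K + 2)" by linarith
  moreover have "2 * \<delta> * (K + 2) = \<delta> * (K + 2) + \<delta> * (K + 2)" by (simp add: algebra_simps)
  ultimately show ?thesis by linarith
qed

lemma one_le_norm_of_nat_diff: "i \<noteq> l \<Longrightarrow> 1 \<le> norm (of_nat i - of_nat l :: 'a::real_normed_field)"
proof -
  assume "i \<noteq> l"
  have "norm (of_nat i - of_nat l :: 'a) = \<bar>real_of_int (int i - int l)\<bar>"
    by (metis norm_of_int of_int_diff of_int_of_nat_eq)
  then show ?thesis using \<open>i \<noteq> l\<close> by linarith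
qed

context pseudo_shift_family
begin

text \<open>The labels \<open>i\<close> carried by \<open>b\<close> separate the images \<open>f\<^sub>i\<^sup>n([r])\<close>, and
  \<open>a \<approx> 0\<close> forces the weights on \<open>[r]\<close> to be large.\<close>

lemma disjoint_blowup_if_approx:
  fixes a b :: "nat \<Rightarrow> 'a"
  assumes \<delta>: "0 < \<delta>" "2 * \<delta> * (real r + real N + 2) \<le> 1"
    and a: "\<And>t. norm (a t) < \<delta>"
    and a_image: "\<And>i m. i < N \<Longrightarrow>
      norm ((if m < r then 1 else 0) - Wprod (fs i) (ws i) m n * a ((fs i ^^ n) m)) < \<delta>"
    and b_image: "\<And>i m. i < N \<Longrightarrow>
      norm ((if m < r then of_nat i else 0) - Wprod (fs i) (ws i) m n * b ((fs i ^^ n) m)) < \<delta>"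
  shows "disjoint_blowup N fs ws n r"
proof -
  have \<delta>_le: "2 * \<delta> * a \<le> 1" if "0 \<le> a" "a \<le> real r + real N + 2" for a
  proof -
    have "2 * \<delta> * a \<le> 2 * \<delta> * (real r + real N + 2)"
      using that \<delta>(1) by (intro mult_left_mono) auto
    with \<delta>(2) show ?thesis by linarith
  qed
  from \<delta>_le[of "real r + 1"] have \<delta>_r: "2 * \<delta> * real r + 2 * \<delta> \<le> 1"
    by (simp add: algebra_simps)
  show ?thesis
    unfolding disjoint_blowup_def
  proof (intro conjI allI impI)
  fix m i assume m: "m < r" and i: "i < N"
  have "1 - \<delta> < norm (Wprod (fs i) (ws i) m n) * \<delta>"
    by (rule norm_factor_gt_if_approx_one[where a = "a ((fs i ^^ n) m)"])
      (use a_image[OF i, of m] m a in simp_all)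
  moreover have "real r * \<delta> \<le> 1 - \<delta>" using \<delta>_r \<delta>(1) by (simp add: algebra_simps)
  ultimately have "real r * \<delta> < norm (Wprod (fs i) (ws i) m n) * \<delta>" by linarith
  then show "real r < norm (Wprod (fs i) (ws i) m n)"
    using \<delta>(1) by (rule mult_right_less_imp_less[OF _ less_imp_le])
next
  fix i l assume il: "i < N" "l < N" "i \<noteq> l"
  show "(fs l ^^ n) ` {..<r} \<inter> (fs i ^^ n) ` {..<r} = {}"
  proof (rule ccontr)
    assume "(fs l ^^ n) ` {..<r} \<inter> (fs i ^^ n) ` {..<r} \<noteq> {}"
    then obtain m1 m2 where m: "m1 < r" "m2 < r" and t: "(fs l ^^ n) m1 = (fs i ^^ n) m2" by auto
    have "norm (of_nat i - of_nat l :: 'a) < 2 * \<delta> * (real N + 2)"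
    proof (rule norm_diff_lt_if_cross_approx)
      show "norm (1 - Wprod (fs l) (ws l) m1 n * a ((fs l ^^ n) m1)) < \<delta>"
        using a_image[OF il(2), of m1] m by simp
      show "norm (1 - Wprod (fs i) (ws i) m2 n * a ((fs l ^^ n) m1)) < \<delta>"
        using a_image[OF il(1), of m2] m t by simp
      show "norm (of_nat l - Wprod (fs l) (ws l) m1 n * b ((fs l ^^ n) m1)) < \<delta>"
        using b_image[OF il(2), of m1] m by simp
      show "norm (of_nat i - Wprod (fs i) (ws i) m2 n * b ((fs l ^^ n) m1)) < \<delta>"
        using b_image[OF il(1), of m2] m t by simp
      show "\<delta> \<le> 1" "norm (of_nat i :: 'a) \<le> real N" "norm (of_nat l :: 'a) \<le> real N"
        using \<delta>_le[of 1] il by (simp_all add: norm_of_nat)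
    qed
    also have "\<dots> \<le> 1" by (rule \<delta>_le) simp_all
    finally show False using one_le_norm_of_nat_diff[OF il(3), where 'a = 'a] by simp
  qed
  fix m m' assume m: "m < r" "r \<le> m'" "(fs l ^^ n) m = (fs i ^^ n) m'"
  have "norm (Wprod (fs i) (ws i) m' n / Wprod (fs l) (ws l) m n) < 2 * \<delta>"
  proof (rule norm_divide_lt_if_approx)
    show "norm (1 - Wprod (fs l) (ws l) m n * a ((fs l ^^ n) m)) < \<delta>"
      using a_image[OF il(2), of m] m by simp
    show "norm (0 - Wprod (fs i) (ws i) m' n * a ((fs l ^^ n) m)) < \<delta>"
      using a_image[OF il(1), of m'] m by simp
    show "\<delta> \<le> 1/2" using \<delta>_le[of 1] by simp
  qed
  then have "norm (Wprod (fs i) (ws i) m' n / Wprod (fs l) (ws l) m n) * r \<le> 2 * \<delta> * r"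
    by (intro mult_right_mono) auto
  also have "\<dots> < 1" using \<delta>_r \<delta>(1) by linarith
  finally show "norm (Wprod (fs i) (ws i) m' n / Wprod (fs l) (ws l) m n) * r < 1" .
  qed
qed

lemma disjoint_weight_condition_iff:
  "disjoint_weight_condition N fs ws \<longleftrightarrow> (\<forall>r n0. \<exists>n\<ge>n0. disjoint_blowup N fs ws n r)"
proof
  assume "disjoint_weight_condition N fs ws"
  then show "\<forall>r n0. \<exists>n\<ge>n0. disjoint_blowup N fs ws n r"
    by (intro allI disjoint_blowup_if_weight_condition)
next
  assume "\<forall>r n0. \<exists>n\<ge>n0. disjoint_blowup N fs ws n r"
  then show "disjoint_weight_condition N fs ws"
    by (intro weight_condition_if_disjoint_blowup) blast
qed

end

context lp_pseudo_shifts
begin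

lemma disjoint_blowup_exists_if_d_weakly_mixing:
  assumes "d_weakly_mixing (lp_space p) (lp_dist p) (\<lambda>_. 0) N (\<lambda>i. pshift (fs i) (ws i))"
  shows "\<exists>n. disjoint_blowup N fs ws n r"
proof -
  define \<delta> :: real where "\<delta> = 1 / (2 * (real r + real N + 2))"
  have \<delta>: "0 < \<delta>" "2 * \<delta> * (real r + real N + 2) \<le> 1" by (simp_all add: \<delta>_def)
  define e where "e c = (\<lambda>m. if m < r then c else 0)" for c :: 'a
  define u where "u i = (\<lambda>\<rho>::nat. if \<rho> = 0 then e 1 else if \<rho> = 1 then e (of_nat i) else (\<lambda>_. 0))" for i :: nat
  have e_lp: "e c \<in> lp_space p" for c
    using c00_subset_lp_space by (auto simp: e_def c00_def intro!: exI[of _ r])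
  have zero: "(\<lambda>_ _. 0) \<in> psum_carrier 2 (lp_space p) (\<lambda>_. 0 :: 'a)"
    using lp_space_zero[where 'a = 'a] by (simp add: psum_carrier_def)
  have u: "u i \<in> psum_carrier 2 (lp_space p) (\<lambda>_. 0)" for i
    using e_lp by (simp add: u_def psum_carrier_def)
  obtain n x where "1 \<le> n" "x \<in> psum_carrier 2 (lp_space p) (\<lambda>_. 0)"
    and x: "\<And>\<rho> t. \<rho> < 2 \<Longrightarrow> norm (0 - x \<rho> t) < \<delta>"
    and Tx: "\<And>i \<rho> t. i < N \<Longrightarrow> \<rho> < 2 \<Longrightarrow> norm (u i \<rho> t - (pshift (fs i) (ws i) ^^ n) (x \<rho>) t) < \<delta>"
    by (erule d_weakly_mixing_pointwise_approx[where u = u, OF assms zero u \<delta>(1)])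
  have "disjoint_blowup N fs ws n r"
  proof (rule disjoint_blowup_if_approx[where a = "x 0" and b = "x 1", OF \<delta>])
    show "norm (x 0 t) < \<delta>" for t using x[of 0 t] by simp
    show "norm ((if m < r then 1 else 0) - Wprod (fs i) (ws i) m n * x 0 ((fs i ^^ n) m)) < \<delta>"
      if "i < N" for i m using Tx[OF that, of 0 m] by (simp add: u_def e_def pshift_funpow)
    show "norm ((if m < r then of_nat i else 0) - Wprod (fs i) (ws i) m n * x 1 ((fs i ^^ n) m)) < \<delta>"
      if "i < N" for i m using Tx[OF that, of 1 m] by (simp add: u_def e_def pshift_funpow)
  qed
  then show ?thesis ..
qed

lemma disjoint_blowup_if_d_weakly_mixing:
  assumes wm: "d_weakly_mixing (lp_space p) (lp_dist p) (\<lambda>_. 0) N (\<lambda>i. pshift (fs i) (ws i))"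
    and N: "0 < N"
  shows "\<exists>n\<ge>n0. disjoint_blowup N fs ws n r"
proof -
  obtain B where B: "\<And>m. norm (ws 0 (fs 0 m)) \<le> B" "1 \<le> B"
    using pseudo_shift[OF N] unfolding pseudo_shift_data_def by (meson max.cobounded1 max.coboundedI2)
  define r' where "r' = max r (nat \<lceil>B ^ n0\<rceil>) + 1"
  obtain n where blowup: "disjoint_blowup N fs ws n r'"
    using disjoint_blowup_exists_if_d_weakly_mixing[OF wm] by blast
  have "B ^ n0 \<le> real r'" unfolding r'_def by linarith
  then have "n0 \<le> n"
    using disjoint_blowup_exponent_ge[OF blowup _ N B] by (simp add: r'_def)
  moreover have "disjoint_blowup N fs ws n r"
    using blowup by (rule disjoint_blowup_mono) (simp add: r'_def)
  ultimately show ?thesis by blast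
qed

end

theorem theorem2p8:
  fixes p :: real and N :: nat
    and fs :: "nat \<Rightarrow> nat \<Rightarrow> nat"
    and ws :: "nat \<Rightarrow> nat \<Rightarrow> 'a::{real_normed_field, banach}"
  assumes p: "1 \<le> p" and N: "2 \<le> N"
    and ps: "\<And>i. i < N \<Longrightarrow> pseudo_shift_data (fs i) (ws i)"
  defines "T \<equiv> (\<lambda>i. pshift (fs i) (ws i))"
  shows
    "(d_weakly_mixing (lp_space p) (lp_dist p) (\<lambda>_. 0) N T
        \<longleftrightarrow> disjoint_hc_criterion (lp_space p) (lp_dist p) (\<lambda>_. 0) N T)
   \<and> (d_weakly_mixing (lp_space p) (lp_dist p) (\<lambda>_. 0) N T
        \<longleftrightarrow> (\<forall>R\<ge>1. disjoint_bc_criterion (psum_carrier R (lp_space p) (\<lambda>_. 0))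
                 (psum_dist R (lp_dist p)) (\<lambda>_. \<lambda>_. 0) N (\<lambda>i. psum_op R (\<lambda>_. 0) (T i))))
   \<and> (d_weakly_mixing (lp_space p) (lp_dist p) (\<lambda>_. 0) N T
        \<longleftrightarrow> (\<exists>nk :: nat \<Rightarrow> nat. strict_mono nk \<and> (\<forall>k. 0 < nk k) \<and>
              (\<forall>m. \<forall>i<N. filterlim (\<lambda>k. norm (Wprod (fs i) (ws i) m (nk k))) at_top sequentially) \<and>
              (\<forall>\<epsilon>>0. \<forall>K M. \<exists>k\<ge>K. \<forall>i<N. \<forall>l<N. i \<noteq> l \<longrightarrow>
                  ((fs l ^^ nk k) ` {..<M} \<inter> (fs i ^^ nk k) ` {..<M} = {} \<and>
                   (\<forall>j \<in> (fs l ^^ nk k) ` {..<M} \<inter> (fs i ^^ nk k) ` (UNIV - {..<M}).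
                      norm (Wprod (fs i) (ws i) (inv (fs i ^^ nk k) j) (nk k)
                            / Wprod (fs l) (ws l) (inv (fs l ^^ nk k) j) (nk k)) < \<epsilon>)))))"
proof -
  interpret lp_pseudo_shifts p N fs ws
    using p ps by unfold_locales
  have T: "T = (\<lambda>i. pshift (fs i) (ws i))" by (simp add: T_def)
  let ?wm = "d_weakly_mixing (lp_space p) (lp_dist p) (\<lambda>_. 0) N T"
  let ?hc = "disjoint_hc_criterion (lp_space p) (lp_dist p) (\<lambda>_. 0) N T"
  let ?bc = "\<lambda>R. disjoint_bc_criterion (psum_carrier R (lp_space p) (\<lambda>_. 0))
    (psum_dist R (lp_dist p)) (\<lambda>_. \<lambda>_. 0) N (\<lambda>i. psum_op R (\<lambda>_. 0) (T i))"
  let ?blowup = "\<forall>r n0. \<exists>n\<ge>n0. disjoint_blowup N fs ws n r"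
  have blowup_if_wm: "?wm \<Longrightarrow> ?blowup"
    using N unfolding T by (intro allI disjoint_blowup_if_d_weakly_mixing) simp_all
  have hc_if_blowup: "?blowup \<Longrightarrow> ?hc"
    unfolding T by (intro disjoint_hc_criterion_if_blowup) blast
  have bc_if_blowup: "?blowup \<Longrightarrow> ?bc R" for R
    unfolding T by (intro disjoint_bc_criterion_if_blowup) blast
  have wm_if_hc: "?hc \<Longrightarrow> ?wm"
    unfolding T by (rule d_weakly_mixing_if_disjoint_hc_criterion)
  have wm_if_bc: "?bc 2 \<Longrightarrow> ?wm"
    unfolding T by (rule d_weakly_mixing_if_disjoint_bc_criterion)
  have wm_if_all_bc: "(\<forall>R\<ge>1. ?bc R) \<Longrightarrow> ?wm"
    using wm_if_bc by (auto dest: spec[of _ 2])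
  have hc: "?wm \<longleftrightarrow> ?hc"
    using blowup_if_wm hc_if_blowup wm_if_hc by blast
  have bc: "?wm \<longleftrightarrow> (\<forall>R\<ge>1. ?bc R)"
    using blowup_if_wm bc_if_blowup wm_if_all_bc by blast
  have iv: "?wm \<longleftrightarrow> disjoint_weight_condition N fs ws"
    using blowup_if_wm hc_if_blowup wm_if_hc disjoint_weight_condition_iff by blast
  show ?thesis
    by (intro conjI hc bc iv[unfolded disjoint_weight_condition_def])
qed

end
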